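(* In the cell FDE setting described in the context, assume (H1), (H2), (H3), that there exists $(\varphi,\psi)\in X_+$ with $\min\{\varphi(0),\psi(0)\}>0$, that $q(0)>0$, that $j(0)=0$, and that there exists $K$ such that $j(\varphi,0)>0$ whenever $(\varphi,\psi)\in U_+$ and $\min_{[-h,0]}\varphi\ge K$. Let $\rho_1(\varphi,\psi):=\varphi(0)$ and $\rho_m(\varphi,\psi):=\min\{\varphi(0),\psi(0)\}$ on $X_+$, and for a function $\rho$ on $X_+$ let $X_0^\rho:=\{\phi\in X_+:\ \rho(S_+(t,\phi))=0\ \text{for all } t\ge0\}$. Then $X_0^{\rho_1}=X_0^{\rho_m}=\{(\varphi,\psi)\in X_+:\ \varphi(0)=0\}$.
   Context: Let $h>0$, $R_-<0$, $I:=(R_-,\infty)$. $\|\phi\|_0:=\max_{\theta\in[-h,0]}|\phi(\theta)|$, $\|\phi\|_1:=\|\phi\|_0+\|\phi'\|_0$; $x_t(s):=x(t+s)$, $s\in[-h,0]$. Let $U:=C^1([-h,0],\mathbb R)\times C^1([-h,0],I)$, $U_+:=C^1([-h,0],[0,\infty)^2)$, $q:I\to\mathbb R$, $j:U\to\mathbb R$, $\mu\ge0$. Cell FDE: $w'(t)=q(v(t))w(t)$, $v'(t)=j(w_t,v_t)-\mu v(t)$, $t>0$, $(w_0,v_0)=(\varphi,\psi)$. $F(\varphi,\psi):=(q(\psi(0))\varphi(0),j(\varphi,\psi)-\mu\psi(0))$, $X:=\{\phi\in U:\phi'(0)=F(\phi)\}$, $X_+:=X\cap U_+$. Solutions are $C^1$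 maps $x=(w,v)$ on $[-h,t_* )$ with $x_0=\phi$, $x_t\in U$, satisfying the equations on $(0,t_* )$. (S): $f$ is $C^1$, each $Df(\phi)$ extends to a linear map on $C([-h,0],\mathbb R^n)$ and $(\phi,\chi)\mapsto D_ef(\phi)\chi$ is continuous. (sLb) on $\mathcal O_+$: for each $\|\cdot\|_1$-bounded $B\subset\mathcal O_+$ there is $L_B$ with $|f(\phi)-f(\chi)|\le L_B\|\phi-\chi\|_0$ on $B$. (H1): $j$ satisfies (S) on $U$, (sLb) on $U_+$, $j\ge0$ on $U_+$, and $j(B_1\times B_2)$ is bounded whenever $B_1\times B_2\subset U_+$ with $B_1$ bounded. (H2): $q$ bounded and $C^1$. (H3): $X_+\neq\emptyset$. Under (H1)-(H3) each $\phi\in X_+$ has a unique solution $x^\phi$ on $[-h,\infty)$ with segments in $X_+$ and $S_+(t,\phi):=x^\phi_t$ is a continuous semiflow on $X_+$. *)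

theory Defs
  imports "HOL-Analysis.Analysis"
begin

text \<open>Convention: an element of C([-h,0],R) or C^1([-h,0],R) is represented by a function
  real => real that vanishes outside [-h,0]. A state is a pair (phi, psi) of such functions.\<close>

type_synonym state = "(real \<Rightarrow> real) \<times> (real \<Rightarrow> real)"

definition zero_out :: "real \<Rightarrow> (real \<Rightarrow> real) \<Rightarrow> bool" where
  "zero_out h f \<longleftrightarrow> (\<forall>s. s \<notin> {-h..0} \<longrightarrow> f s = 0)"

definition Cfun :: "real \<Rightarrow> (real \<Rightarrow> real) \<Rightarrow> bool" where
  "Cfun h f \<longleftrightarrow> zero_out h f \<and> continuous_on {-h..0} f"

definition C1fun :: "real \<Rightarrow> (real \<Rightarrow> real) \<Rightarrow> bool" where
  "C1fun h f \<longleftrightarrow> zero_out h f \<and>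
     (\<exists>f'. continuous_on {-h..0} f' \<and>
        (\<forall>\<theta>\<in>{-h..0}. (f has_real_derivative f' \<theta>) (at \<theta> within {-h..0})))"

definition dr :: "real \<Rightarrow> (real \<Rightarrow> real) \<Rightarrow> real \<Rightarrow> real" where
  "dr h f \<theta> = (if \<theta> \<in> {-h..0} then (THE d. (f has_real_derivative d) (at \<theta> within {-h..0})) else 0)"

definition n0 :: "real \<Rightarrow> (real \<Rightarrow> real) \<Rightarrow> real" where
  "n0 h f = (SUP \<theta>\<in>{-h..0}. \<bar>f \<theta>\<bar>)"

definition n1 :: "real \<Rightarrow> (real \<Rightarrow> real) \<Rightarrow> real" where
  "n1 h f = n0 h f + n0 h (dr h f)"

definition n0p :: "real \<Rightarrow> state \<Rightarrow> real" where
  "n0p h \<phi> = (SUP \<theta>\<in>{-h..0}. norm (fst \<phi> \<theta>, snd \<phi> \<theta>))"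

definition n1p :: "real \<Rightarrow> state \<Rightarrow> real" where
  "n1p h \<phi> = n0p h \<phi> + n0p h (dr h (fst \<phi>), dr h (snd \<phi>))"

definition psub :: "state \<Rightarrow> state \<Rightarrow> state" where
  "psub \<phi> \<xi> = (\<lambda>s. fst \<phi> s - fst \<xi> s, \<lambda>s. snd \<phi> s - snd \<xi> s)"

definition plc :: "real \<Rightarrow> state \<Rightarrow> real \<Rightarrow> state \<Rightarrow> state" where
  "plc a \<phi> b \<xi> = (\<lambda>s. a * fst \<phi> s + b * fst \<xi> s, \<lambda>s. a * snd \<phi> s + b * snd \<xi> s)"

definition Cp :: "real \<Rightarrow> state set" where
  "Cp h = {\<phi>. Cfun h (fst \<phi>) \<and> Cfun h (snd \<phi>)}"

definition C1p :: "real \<Rightarrow> state set" where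
  "C1p h = {\<phi>. C1fun h (fst \<phi>) \<and> C1fun h (snd \<phi>)}"

text \<open>U = C^1([-h,0],R) x C^1([-h,0],I) with I = (R_-, infinity)\<close>
definition Uset :: "real \<Rightarrow> real \<Rightarrow> state set" where
  "Uset h Rm = {\<phi>\<in>C1p h. \<forall>\<theta>\<in>{-h..0}. snd \<phi> \<theta> \<in> {Rm<..}}"

definition Uplus :: "real \<Rightarrow> state set" where
  "Uplus h = {\<phi>\<in>C1p h. \<forall>\<theta>\<in>{-h..0}. fst \<phi> \<theta> \<ge> 0 \<and> snd \<phi> \<theta> \<ge> 0}"

text \<open>Condition (S) for f on U (Frechet C^1 w.r.t. the norm n1p, with derivative Df;
  each Df phi is linear on C([-h,0],R^2) and (phi,chi) |-> Df phi chi is continuous on U x C)\<close>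
definition condS :: "real \<Rightarrow> state set \<Rightarrow> (state \<Rightarrow> real) \<Rightarrow> bool" where
  "condS h Os f \<longleftrightarrow> (\<exists>Df :: state \<Rightarrow> state \<Rightarrow> real.
     (\<forall>\<phi>\<in>Os. \<forall>\<epsilon>>0. \<exists>\<delta>>0. \<forall>\<xi>\<in>Os. n1p h (psub \<xi> \<phi>) < \<delta> \<longrightarrow>
         \<bar>f \<xi> - f \<phi> - Df \<phi> (psub \<xi> \<phi>)\<bar> \<le> \<epsilon> * n1p h (psub \<xi> \<phi>)) \<and>
     (\<forall>\<phi>\<in>Os. \<forall>\<epsilon>>0. \<exists>\<delta>>0. \<forall>\<psi>\<in>Os. n1p h (psub \<psi> \<phi>) < \<delta> \<longrightarrow>
         (\<forall>\<xi>\<in>C1p h. \<bar>Df \<psi> \<xi> - Df \<phi> \<xi>\<bar> \<le> \<epsilon> * n1p h \<xi>)) \<and>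
     (\<forall>\<phi>\<in>Os. \<forall>\<xi>1\<in>Cp h. \<forall>\<xi>2\<in>Cp h. \<forall>a b.
         Df \<phi> (plc a \<xi>1 b \<xi>2) = a * Df \<phi> \<xi>1 + b * Df \<phi> \<xi>2) \<and>
     (\<forall>\<phi>\<in>Os. \<forall>\<xi>\<in>Cp h. \<forall>\<epsilon>>0. \<exists>\<delta>>0. \<forall>\<phi>'\<in>Os. \<forall>\<xi>'\<in>Cp h.
         n1p h (psub \<phi>' \<phi>) < \<delta> \<and> n0p h (psub \<xi>' \<xi>) < \<delta> \<longrightarrow> \<bar>Df \<phi>' \<xi>' - Df \<phi> \<xi>\<bar> < \<epsilon>))"

definition sLb :: "real \<Rightarrow> state set \<Rightarrow> (state \<Rightarrow> real) \<Rightarrow> bool" where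
  "sLb h Os f \<longleftrightarrow> (\<forall>B\<subseteq>Os. (\<exists>M. \<forall>\<phi>\<in>B. n1p h \<phi> \<le> M) \<longrightarrow>
      (\<exists>L. \<forall>\<phi>\<in>B. \<forall>\<xi>\<in>B. \<bar>f \<phi> - f \<xi>\<bar> \<le> L * n0p h (psub \<phi> \<xi>)))"

definition H1 :: "real \<Rightarrow> real \<Rightarrow> (state \<Rightarrow> real) \<Rightarrow> bool" where
  "H1 h Rm j \<longleftrightarrow> condS h (Uset h Rm) j \<and> sLb h (Uplus h) j \<and>
     (\<forall>\<phi>\<in>Uplus h. j \<phi> \<ge> 0) \<and>
     (\<forall>B1 B2. B1 \<times> B2 \<subseteq> Uplus h \<longrightarrow> (\<exists>M. \<forall>f\<in>B1. n1 h f \<le> M) \<longrightarrow>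
         (\<exists>M. \<forall>\<phi>\<in>B1 \<times> B2. \<bar>j \<phi>\<bar> \<le> M))"

definition H2 :: "real \<Rightarrow> (real \<Rightarrow> real) \<Rightarrow> bool" where
  "H2 Rm q \<longleftrightarrow> (\<exists>M. \<forall>x\<in>{Rm<..}. \<bar>q x\<bar> \<le> M) \<and>
     (\<exists>q'. continuous_on {Rm<..} q' \<and> (\<forall>x\<in>{Rm<..}. (q has_real_derivative q' x) (at x)))"

definition Fmap :: "(real \<Rightarrow> real) \<Rightarrow> (state \<Rightarrow> real) \<Rightarrow> real \<Rightarrow> state \<Rightarrow> real \<times> real" where
  "Fmap q j \<mu> \<phi> = (q (snd \<phi> 0) * fst \<phi> 0, j \<phi> - \<mu> * snd \<phi> 0)"

definition Xset :: "real \<Rightarrow> real \<Rightarrow> (real \<Rightarrow> real) \<Rightarrow> (state \<Rightarrow> real) \<Rightarrow> real \<Rightarrow> state set" where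
  "Xset h Rm q j \<mu> = {\<phi>\<in>Uset h Rm. (dr h (fst \<phi>) 0, dr h (snd \<phi>) 0) = Fmap q j \<mu> \<phi>}"

definition Xplus :: "real \<Rightarrow> real \<Rightarrow> (real \<Rightarrow> real) \<Rightarrow> (state \<Rightarrow> real) \<Rightarrow> real \<Rightarrow> state set" where
  "Xplus h Rm q j \<mu> = Xset h Rm q j \<mu> \<inter> Uplus h"

definition seg :: "real \<Rightarrow> state \<Rightarrow> real \<Rightarrow> state" where
  "seg h x t = ((\<lambda>s. if s \<in> {-h..0} then fst x (t + s) else 0),
                (\<lambda>s. if s \<in> {-h..0} then snd x (t + s) else 0))"

definition is_sol :: "real \<Rightarrow> real \<Rightarrow> (real \<Rightarrow> real) \<Rightarrow> (state \<Rightarrow> real) \<Rightarrow> real \<Rightarrow> state \<Rightarrow> state \<Rightarrow> bool" where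
  "is_sol h Rm q j \<mu> \<phi> x \<longleftrightarrow>
     (\<exists>w' v'. continuous_on {-h..} w' \<and> continuous_on {-h..} v' \<and>
        (\<forall>t\<ge>-h. (fst x has_real_derivative w' t) (at t within {-h..}) \<and>
                 (snd x has_real_derivative v' t) (at t within {-h..})) \<and>
        (\<forall>t>0. w' t = q (snd x t) * fst x t \<and>
               v' t = j (seg h x t) - \<mu> * snd x t)) \<and>
     seg h x 0 = \<phi> \<and> (\<forall>t\<ge>0. seg h x t \<in> Uset h Rm)"

definition Splus :: "real \<Rightarrow> real \<Rightarrow> (real \<Rightarrow> real) \<Rightarrow> (state \<Rightarrow> real) \<Rightarrow> real \<Rightarrow> real \<Rightarrow> state \<Rightarrow> state" where
  "Splus h Rm q j \<mu> t \<phi> = (THE y. \<exists>x. is_sol h Rm q j \<mu> \<phi> x \<and>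
       (\<forall>s\<ge>0. seg h x s \<in> Xplus h Rm q j \<mu>) \<and> y = seg h x t)"

definition X0 :: "real \<Rightarrow> real \<Rightarrow> (real \<Rightarrow> real) \<Rightarrow> (state \<Rightarrow> real) \<Rightarrow> real \<Rightarrow> (state \<Rightarrow> real) \<Rightarrow> state set" where
  "X0 h Rm q j \<mu> \<rho> = {\<phi>\<in>Xplus h Rm q j \<mu>. \<forall>t\<ge>0. \<rho> (Splus h Rm q j \<mu> t \<phi>) = 0}"

definition rho1 :: "state \<Rightarrow> real" where "rho1 \<phi> = fst \<phi> 0"
definition rhom :: "state \<Rightarrow> real" where "rhom \<phi> = min (fst \<phi> 0) (snd \<phi> 0)"

end

theory Submission
  imports Defs
begin

text \<open>Fix an initial state \<open>(a, b) \<in> X\<^sub>+\<close>. For a given \<open>v\<close>-component \<open>V\<close> the \<open>w\<close>-equation is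
  linear and is solved by \<open>w(t) = a(0) exp (\<integral>\<^sub>0\<^sup>t q(V))\<close>; variation of constants turns the
  \<open>v\<close>-equation into a fixed point problem \<open>V = picard V\<close>. On every interval \<open>[0,T]\<close> the a priori
  bounds (\<open>q\<close> is bounded, \<open>j\<close> is bounded on sets with bounded first component) together with the
  Lipschitz condition (sLb) make \<open>picard\<close> a contraction by \<open>1/2\<close> in an exponentially weighted sup
  norm. Hence the Picard iterates converge to the unique solution, and \<open>S\<^sub>+(t,(a,b))\<close> is its
  segment at \<open>t\<close>.

  Its \<open>w\<close>-component at time \<open>t\<close> is \<open>a(0) exp (\<integral>\<^sub>0\<^sup>t q(v))\<close>, which vanishes for all \<open>t\<close> iff
  \<open>a(0) = 0\<close>; since \<open>v \<ge> 0\<close>, this settles \<open>\<rho>\<^sub>1\<close> and one half of \<open>\<rho>\<^sub>m\<close>. If \<open>a(0) > 0\<close> but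
  \<open>min (w(t), v(t)) = 0\<close> for all \<open>t\<close>, then \<open>v \<equiv> 0\<close>, so \<open>w(t) = a(0) exp (q(0) t)\<close> exceeds \<open>K\<close> on a
  whole delay interval and \<open>0 = v'(t) = j(w\<^sub>t, 0) > 0\<close>, a contradiction.\<close>

section \<open>Real functions on the delay interval\<close>

lemma dr_eqI:
  assumes "h > 0" "\<theta> \<in> {-h..0}" "(f has_real_derivative d) (at \<theta> within {-h..0})"
  shows "dr h f \<theta> = d"
proof -
  have "at \<theta> within {-h..0} \<noteq> bot"
    using assms(1,2) islimpt_Icc[of "-h" 0 \<theta>] by (simp add: trivial_limit_within)
  then have "(THE d. (f has_real_derivative d) (at \<theta> within {-h..0})) = d"
    using assms(3) has_field_derivative_unique by blast
  then show ?thesis using assms(2) by (simp add: dr_def)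
qed

lemma C1fun_dr:
  assumes "h > 0" "C1fun h f"
  shows "continuous_on {-h..0} (dr h f)"
    and "\<And>\<theta>. \<theta> \<in> {-h..0} \<Longrightarrow> (f has_real_derivative dr h f \<theta>) (at \<theta> within {-h..0})"
proof -
  obtain f' where f': "continuous_on {-h..0} f'"
    "\<And>\<theta>. \<theta> \<in> {-h..0} \<Longrightarrow> (f has_real_derivative f' \<theta>) (at \<theta> within {-h..0})"
    using assms(2) unfolding C1fun_def by blast
  have "\<And>\<theta>. \<theta> \<in> {-h..0} \<Longrightarrow> dr h f \<theta> = f' \<theta>"
    using dr_eqI[OF assms(1)] f'(2) by blast
  then show "continuous_on {-h..0} (dr h f)"
    and "\<And>\<theta>. \<theta> \<in> {-h..0} \<Longrightarrow> (f has_real_derivative dr h f \<theta>) (at \<theta> within {-h..0})"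
    using continuous_on_eq[OF f'(1)] f'(2) by metis+
qed

lemma C1fun_zero_out: "C1fun h f \<Longrightarrow> s \<notin> {-h..0} \<Longrightarrow> f s = 0"
  by (simp add: C1fun_def zero_out_def)

lemma C1fun_continuous_on:
  assumes "h > 0" "C1fun h f"
  shows "continuous_on {-h..0} f"
  using C1fun_dr(2)[OF assms] by (intro DERIV_continuous_on) blast

lemma n0_le:
  assumes "h \<ge> 0" "\<And>\<theta>. \<theta> \<in> {-h..0} \<Longrightarrow> \<bar>f \<theta>\<bar> \<le> M"
  shows "n0 h f \<le> M"
  unfolding n0_def using assms by (intro cSUP_least) auto

lemma n0p_le:
  assumes "h \<ge> 0" "\<And>\<theta>. \<theta> \<in> {-h..0} \<Longrightarrow> \<bar>fst \<phi> \<theta>\<bar> + \<bar>snd \<phi> \<theta>\<bar> \<le> M"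
  shows "n0p h \<phi> \<le> M"
  unfolding n0p_def using assms
  by (intro cSUP_least) (auto intro: order_trans[OF norm_Pair_le])

lemma n0p_nonneg:
  assumes "h \<ge> 0" "\<And>\<theta>. \<theta> \<in> {-h..0} \<Longrightarrow> \<bar>fst \<phi> \<theta>\<bar> + \<bar>snd \<phi> \<theta>\<bar> \<le> M"
  shows "0 \<le> n0p h \<phi>"
proof -
  have "bdd_above ((\<lambda>\<theta>. norm (fst \<phi> \<theta>, snd \<phi> \<theta>)) ` {-h..0})"
    by (rule bdd_aboveI2[of _ _ M]) (use assms in \<open>auto intro: order_trans[OF norm_Pair_le]\<close>)
  then have "norm (fst \<phi> 0, snd \<phi> 0) \<le> n0p h \<phi>"
    unfolding n0p_def by (rule cSUP_upper[rotated]) (use assms in auto)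
  then show ?thesis by (meson norm_ge_zero order_trans)
qed

lemma continuous_on_Icc_abs_bound:
  fixes f :: "real \<Rightarrow> real"
  assumes "continuous_on {x..y} f"
  obtains B where "B \<ge> 0" "\<And>t. t \<in> {x..y} \<Longrightarrow> \<bar>f t\<bar> \<le> B"
  using continuous_on_compact_bound[OF compact_Icc assms] by (metis real_norm_def)

lemma integral_has_real_derivative_atLeast:
  fixes f :: "real \<Rightarrow> real"
  assumes "continuous_on {a..} f" "t \<ge> a"
  shows "((\<lambda>t. integral {a..t} f) has_real_derivative f t) (at t within {a..})"
proof -
  have "((\<lambda>t. integral {a..t} f) has_real_derivative f t) (at t within {a..t+1})"
    by (rule integral_has_real_derivative) (use assms in \<open>auto intro: continuous_on_subset\<close>)
  moreover have "at t within {a..t+1} = at t within {a..}"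
    by (rule at_within_nhd[where S="{..<t+1}"]) auto
  ultimately show ?thesis by simp
qed

lemma continuous_on_atLeastI:
  fixes f :: "real \<Rightarrow> real"
  assumes "\<And>T. T > a \<Longrightarrow> continuous_on {a..T} f"
  shows "continuous_on {a..} f"
  unfolding continuous_on_eq_continuous_within
proof
  fix x :: real assume x: "x \<in> {a..}"
  have "continuous (at x within {a..x+1}) f"
    using assms[of "x+1"] x by (auto simp: continuous_on_eq_continuous_within)
  moreover have "at x within {a..x+1} = at x within {a..}"
    by (rule at_within_nhd[where S="{..<x+1}"]) auto
  ultimately show "continuous (at x within {a..}) f" by simp
qed

lemma continuous_on_piecewise:
  fixes f' g' :: "real \<Rightarrow> real"
  assumes "h \<ge> 0" "continuous_on {-h..0} f'" "continuous_on {0..} g'" "f' 0 = g' 0"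
  shows "continuous_on {-h..} (\<lambda>t. if t \<le> 0 then f' t else g' t)"
proof -
  have "continuous_on ({-h..0} \<union> {0..}) (\<lambda>t. if t \<le> (0::real) then f' t else g' t)"
  proof (rule continuous_on_closed_Un)
    show "continuous_on {-h..0} (\<lambda>t. if t \<le> (0::real) then f' t else g' t)"
      by (rule continuous_on_eq[OF assms(2)]) auto
    show "continuous_on {0..} (\<lambda>t. if t \<le> (0::real) then f' t else g' t)"
      by (rule continuous_on_eq[OF assms(3)]) (use assms(4) in \<open>auto simp: antisym\<close>)
  qed auto
  moreover have "{-h..} = {-h..0} \<union> {0::real..}" using assms(1) by auto
  ultimately show ?thesis by simp
qed

lemma has_field_derivative_at_within_closed_notin:
  assumes "closed S" "t \<notin> S"
  shows "(f has_field_derivative D) (at t within S)"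
proof -
  have "at t within S = bot"
    using assms closed_limpt by (auto simp: trivial_limit_within)
  then show ?thesis by (simp add: has_field_derivative_iff)
qed

lemma piecewise_has_real_derivative:
  fixes f g f' g' :: "real \<Rightarrow> real"
  assumes h: "h \<ge> 0"
    and fd: "\<And>t. t \<in> {-h..0} \<Longrightarrow> (f has_real_derivative f' t) (at t within {-h..0})"
    and fc: "continuous_on {-h..0} f'"
    and gd: "\<And>t. t \<ge> 0 \<Longrightarrow> (g has_real_derivative g' t) (at t within {0..})"
    and gc: "continuous_on {0..} g'"
    and "f 0 = g 0" and "f' 0 = g' 0"
  shows "\<And>t. t \<ge> -h \<Longrightarrow> ((\<lambda>t. if t \<le> 0 then f t else g t) has_real_derivative
            (if t \<le> 0 then f' t else g' t)) (at t within {-h..})"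
    and "continuous_on {-h..} (\<lambda>t. if t \<le> 0 then f' t else g' t)"
proof -
  let ?F = "\<lambda>t. if t \<le> 0 then f t else g t"
  let ?F' = "\<lambda>t. if t \<le> (0::real) then f' t else g' t"
  fix t :: real assume t: "t \<ge> -h"
  have "(?F has_real_derivative ?F' t) (at t within {-h..0})"
  proof (cases "t \<le> 0")
    case True
    then have "t \<in> {-h..0}" using t by auto
    from has_field_derivative_transform_within[OF fd[OF this] zero_less_one this]
    show ?thesis using True by auto
  qed (auto intro: has_field_derivative_at_within_closed_notin)
  moreover have "(?F has_real_derivative ?F' t) (at t within {0..})"
  proof (cases "t \<ge> 0")
    case True
    have "(g has_real_derivative ?F' t) (at t within {0..})"
      using gd[OF True] assms(7) True by (cases "t = 0") auto
    from has_field_derivative_transform_within[OF this zero_less_one, of ?F] assms(6) True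
    show ?thesis by auto
  qed (auto intro: has_field_derivative_at_within_closed_notin)
  moreover have "{-h..} = {-h..0} \<union> {0::real..}" using h by auto
  ultimately show "(?F has_real_derivative ?F' t) (at t within {-h..})"
    unfolding has_field_derivative_iff by (simp add: Lim_within_Un)
next
  show "continuous_on {-h..} (\<lambda>t. if t \<le> 0 then f' t else g' t)"
    by (rule continuous_on_piecewise[OF h fc gc assms(7)])
qed

lemma C1fun_segment:
  fixes X X' :: "real \<Rightarrow> real"
  assumes h: "h > 0" and t: "t \<ge> 0"
    and Xd: "\<And>s. s \<ge> -h \<Longrightarrow> (X has_real_derivative X' s) (at s within {-h..})"
    and Xc: "continuous_on {-h..} X'"
  shows "C1fun h (\<lambda>s. if s \<in> {-h..0} then X (t+s) else 0)"
    and "\<And>\<theta>. \<theta> \<in> {-h..0} \<Longrightarrow> dr h (\<lambda>s. if s \<in> {-h..0} then X (t+s) else 0) \<theta> = X' (t+\<theta>)"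
proof -
  let ?f = "\<lambda>s. if s \<in> {-h..0} then X (t+s) else 0"
  have D: "(?f has_real_derivative X' (t+\<theta>)) (at \<theta> within {-h..0})" if th: "\<theta> \<in> {-h..0}" for \<theta>
  proof -
    have "(X has_real_derivative X' (t+\<theta>)) (at (t+\<theta>) within ((\<lambda>s. t+s) ` {-h..0}))"
      by (rule has_field_derivative_subset[OF Xd]) (use th t in auto)
    moreover have "((\<lambda>s. t+s) has_real_derivative 1) (at \<theta> within {-h..0})"
      by (auto intro!: derivative_eq_intros)
    ultimately have "(X \<circ> (\<lambda>s. t+s) has_real_derivative X' (t+\<theta>) * 1) (at \<theta> within {-h..0})"
      by (rule DERIV_image_chain)
    from has_field_derivative_transform_within[OF this zero_less_one th, of ?f]
    show ?thesis by auto
  qed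
  have "continuous_on {-h..0} (\<lambda>\<theta>. X' (t+\<theta>))"
    by (rule continuous_on_compose2[OF Xc]) (use t in \<open>auto intro!: continuous_intros\<close>)
  then show "C1fun h ?f" unfolding C1fun_def zero_out_def
    by (intro conjI allI impI exI[of _ "\<lambda>\<theta>. X' (t+\<theta>)"]) (use D in auto)
  show "\<And>\<theta>. \<theta> \<in> {-h..0} \<Longrightarrow> dr h ?f \<theta> = X' (t+\<theta>)"
    using dr_eqI[OF h] D by blast
qed

lemma eq_0_if_le_div_pow2:
  fixes z A :: real
  assumes "\<And>n. \<bar>z\<bar> \<le> A / 2^n"
  shows "z = 0"
proof -
  have "(\<lambda>n. A / 2^n) \<longlonglongrightarrow> 0" by (rule LIMSEQ_divide_realpow_zero) simp
  from LIMSEQ_le_const[OF this, of "\<bar>z\<bar>"] assms show ?thesis by auto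
qed

lemma le_if_le_add_div_pow2:
  fixes x M A :: real
  assumes "\<And>n. x \<le> M + A / 2^n"
  shows "x \<le> M"
proof -
  have "(\<lambda>n. M + A / 2^n) \<longlonglongrightarrow> M + 0"
    by (intro tendsto_add tendsto_const LIMSEQ_divide_realpow_zero) simp
  from LIMSEQ_le_const[OF this, of x] assms show ?thesis by auto
qed

lemma eventually_div_pow2_less:
  fixes A e :: real
  assumes "e > 0"
  shows "\<exists>N. \<forall>n\<ge>N. A / 2^n < e"
proof -
  have "(\<lambda>n. A / 2^n) \<longlonglongrightarrow> 0" by (rule LIMSEQ_divide_realpow_zero) simp
  from order_tendstoD(2)[OF this assms] show ?thesis by (simp add: eventually_sequentially)
qed

lemma geometric_Cauchy_limit:
  fixes x :: "nat \<Rightarrow> real"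
  assumes step: "\<And>n. \<bar>x (Suc n) - x n\<bar> \<le> c / 2^n"
  shows "convergent x" and "\<And>n. \<bar>lim x - x n\<bar> \<le> 2 * c / 2^n"
proof -
  have c: "c \<ge> 0" using step[of 0] by (simp add: order_trans[OF abs_ge_zero])
  have tail: "\<bar>x (n+k) - x n\<bar> \<le> 2 * c / 2^n - 2 * c / 2^(n+k)" for n k
  proof (induction k)
    case (Suc k)
    have "\<bar>x (n + Suc k) - x n\<bar> \<le> \<bar>x (n+k) - x n\<bar> + \<bar>x (Suc (n+k)) - x (n+k)\<bar>" by simp
    moreover have "2 * c / 2^(n + Suc k) = c / 2^(n+k)" by simp
    ultimately show ?case using Suc.IH step[of "n+k"] by linarith
  qed simp
  have dist: "\<bar>x m - x n\<bar> \<le> 2 * c / 2^n" if "m \<ge> n" for m n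
  proof -
    have "2 * c / 2^m \<ge> 0" using c by simp
    then show ?thesis using tail[of n "m - n"] that by simp
  qed
  show cv: "convergent x"
  proof (rule Cauchy_convergent, rule metric_CauchyI)
    fix e :: real assume "e > 0"
    then obtain N where N: "\<And>n. n \<ge> N \<Longrightarrow> 2 * c / 2^n < e" using eventually_div_pow2_less by blast
    have "dist (x m) (x n) < e" if "m \<ge> N" "n \<ge> N" for m n
      using dist[of m n] dist[of n m] N[of n] N[of m] that
      by (cases "m \<le> n") (auto simp: dist_real_def abs_minus_commute)
    then show "\<exists>M. \<forall>m\<ge>M. \<forall>n\<ge>M. dist (x m) (x n) < e" by blast
  qed
  fix n
  have "(\<lambda>m. \<bar>x m - x n\<bar>) \<longlonglongrightarrow> \<bar>lim x - x n\<bar>"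
    using cv by (intro tendsto_intros) (simp add: convergent_LIMSEQ_iff)
  then show "\<bar>lim x - x n\<bar> \<le> 2 * c / 2^n"
    by (rule LIMSEQ_le_const2) (use dist in blast)
qed

lemma abs_exp_diff_le:
  fixes x y :: real
  shows "\<bar>exp x - exp y\<bar> \<le> exp (max x y) * \<bar>x - y\<bar>"
proof -
  have *: "exp v - exp u \<le> exp v * (v - u)" if "u \<le> v" for u v :: real
  proof -
    have "1 - (v - u) \<le> exp (u - v)"
      using exp_ge_add_one_self[of "u - v"] by linarith
    then have "exp v * (1 - (v - u)) \<le> exp v * exp (u - v)"
      by (rule mult_left_mono) simp
    also have "\<dots> = exp u" by (simp flip: exp_add)
    finally show ?thesis by (simp add: algebra_simps)
  qed
  show ?thesis
    using *[of x y] *[of y x] by (cases "x \<le> y") (auto simp: max_def abs_minus_commute)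
qed

lemma integral_exp_le:
  fixes l r c :: real
  assumes "l \<ge> 1" "r \<ge> 0" "c \<ge> 0"
  shows "(\<lambda>s. c * exp (l * s)) integrable_on {0..r}"
    and "integral {0..r} (\<lambda>s. c * exp (l * s)) \<le> c * exp (l * r) / l"
proof -
  have "((\<lambda>s. c * exp (l * s)) has_integral (c * exp (l * r) / l - c * exp (l * 0) / l)) {0..r}"
  proof (rule fundamental_theorem_of_calculus[OF assms(2)])
    fix x assume "x \<in> {0..r}"
    have "((\<lambda>s. c * exp (l * s) / l) has_real_derivative c * (exp (l * x) * l) / l) (at x within {0..r})"
      by (auto intro!: derivative_eq_intros)
    then show "((\<lambda>s. c * exp (l * s) / l) has_vector_derivative c * exp (l * x)) (at x within {0..r})"
      using assms(1) by (simp add: has_real_derivative_iff_has_vector_derivative)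
  qed
  then show "(\<lambda>s. c * exp (l * s)) integrable_on {0..r}"
    and "integral {0..r} (\<lambda>s. c * exp (l * s)) \<le> c * exp (l * r) / l"
    using assms by (auto dest: integral_unique)
qed

lemma eq_if_has_real_derivative_0:
  fixes f D :: "real \<Rightarrow> real"
  assumes "t \<ge> 0" "\<And>x. x \<in> {0..t} \<Longrightarrow> (f has_real_derivative D x) (at x within {0..t})"
    and "\<And>x. x \<in> {0<..t} \<Longrightarrow> D x = 0"
  shows "f t = f 0"
proof (rule has_derivative_zero_unique_strong_interval[of "{0}" 0 t f "f 0" t])
  show "continuous_on {0..t} f" using assms(2) by (rule DERIV_continuous_on)
  fix x assume "x \<in> {0..t} - {0}"
  then have "(f has_real_derivative 0) (at x within {0..t})" using assms(2,3)[of x] by auto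
  moreover have "(*) 0 = (\<lambda>h::real. 0::real)" by auto
  ultimately show "(f has_derivative (\<lambda>h. 0)) (at x within {0..t})"
    by (simp add: has_field_derivative_def)
qed (use assms(1) in auto)

section \<open>Trajectories generated by a \<open>v\<close>-component\<close>

locale cell_fde_init =
  fixes h Rm \<mu> :: real and q :: "real \<Rightarrow> real" and j :: "state \<Rightarrow> real" and a b :: "real \<Rightarrow> real"
  assumes h_pos: "h > 0" and Rm_neg: "Rm < 0" and mu_nonneg: "\<mu> \<ge> 0"
    and H1: "H1 h Rm j" and H2: "H2 Rm q" and init_Xplus: "(a, b) \<in> Xplus h Rm q j \<mu>"
begin

lemma a_C1: "C1fun h a" and b_C1: "C1fun h b"
  and a_compat: "dr h a 0 = q (b 0) * a 0" and b_compat: "dr h b 0 = j (a, b) - \<mu> * b 0"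
  and init_Uplus: "(a, b) \<in> Uplus h"
  using init_Xplus by (auto simp: Xplus_def Xset_def Uplus_def Fmap_def C1p_def)

lemma a_nonneg: "a s \<ge> 0"
  using init_Uplus C1fun_zero_out[OF a_C1, of s] by (cases "s \<in> {-h..0}") (auto simp: Uplus_def)

lemma b_nonneg: "b s \<ge> 0"
  using init_Uplus C1fun_zero_out[OF b_C1, of s] by (cases "s \<in> {-h..0}") (auto simp: Uplus_def)

lemma j_nonneg: "\<phi> \<in> Uplus h \<Longrightarrow> j \<phi> \<ge> 0"
  using H1 by (auto simp: H1_def)

lemma Uplus_subset_Uset: "Uplus h \<subseteq> Uset h Rm"
  using Rm_neg by (auto simp: Uplus_def Uset_def intro: less_le_trans)

lemma q_bounded: obtains Q where "Q \<ge> 0" "\<And>x. x > Rm \<Longrightarrow> \<bar>q x\<bar> \<le> Q"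
proof -
  obtain M where M: "\<forall>x\<in>{Rm<..}. \<bar>q x\<bar> \<le> M" using H2 by (auto simp: H2_def)
  show ?thesis
  proof (rule that[of "max M 0"])
    show "\<bar>q x\<bar> \<le> max M 0" if "x > Rm" for x using M that by (auto simp: le_max_iff_disj)
  qed simp
qed

lemma q_derivative:
  obtains q' where "continuous_on {Rm<..} q'" "\<And>x. x > Rm \<Longrightarrow> (q has_real_derivative q' x) (at x)"
  using H2 by (auto simp: H2_def)

lemma q_continuous: "continuous_on {Rm<..} q"
  by (rule q_derivative, rule has_real_derivative_imp_continuous_on) auto

lemma q_lipschitz_on:
  obtains Lq where "Lq \<ge> 0" "\<And>x y. x \<in> {0..M} \<Longrightarrow> y \<in> {0..M} \<Longrightarrow> \<bar>q x - q y\<bar> \<le> Lq * \<bar>x - y\<bar>"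
proof -
  obtain q' where q'c: "continuous_on {Rm<..} q'"
    and q'd: "\<And>x. x > Rm \<Longrightarrow> (q has_real_derivative q' x) (at x)"
    using q_derivative by blast
  have "continuous_on {0..M} q'" by (rule continuous_on_subset[OF q'c]) (use Rm_neg in auto)
  then obtain D where D0: "D \<ge> 0" and D: "\<And>x. x \<in> {0..M} \<Longrightarrow> \<bar>q' x\<bar> \<le> D"
    using continuous_on_compact_bound[of "{0..M}" q'] by auto
  have lip: "\<bar>q y - q x\<bar> \<le> D * \<bar>y - x\<bar>" if xy: "x \<in> {0..M}" "y \<in> {0..M}" "x < y" for x y
  proof -
    obtain z where z: "x < z" "z < y" "q y - q x = (y - x) * q' z"
      using MVT2[OF xy(3), of q q'] q'd xy Rm_neg by force
    then have "\<bar>q' z\<bar> \<le> D" using D xy by auto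
    then show ?thesis unfolding z(3) abs_mult using z by (simp add: mult.commute mult_left_mono)
  qed
  show ?thesis
  proof (rule that[OF D0])
    fix x y assume "x \<in> {0..M}" "y \<in> {0..M}"
    then show "\<bar>q x - q y\<bar> \<le> D * \<bar>x - y\<bar>"
      using lip[of x y] lip[of y x] by (cases x y rule: linorder_cases) (auto simp: abs_minus_commute)
  qed
qed

text \<open>Candidates for the \<open>v\<close>-component of the solution. Given one, the linear \<open>w\<close>-equation is
  solved explicitly by \<open>wcomp V\<close>.\<close>

definition admissible :: "(real \<Rightarrow> real) \<Rightarrow> (real \<Rightarrow> real) \<Rightarrow> bool" where
  "admissible V V' \<longleftrightarrow> (\<forall>t\<le>0. V t = b t) \<and> continuous_on {-h..} V' \<and>
     (\<forall>t\<ge>-h. (V has_real_derivative V' t) (at t within {-h..})) \<and> (\<forall>t\<ge>0. V t \<ge> 0)"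

definition wexp :: "(real \<Rightarrow> real) \<Rightarrow> real \<Rightarrow> real" where
  "wexp V t = a 0 * exp (integral {0..t} (\<lambda>s. q (V s)))"

definition wcomp :: "(real \<Rightarrow> real) \<Rightarrow> real \<Rightarrow> real" where
  "wcomp V t = (if t \<le> 0 then a t else wexp V t)"

definition wcomp' :: "(real \<Rightarrow> real) \<Rightarrow> real \<Rightarrow> real" where
  "wcomp' V t = (if t \<le> 0 then dr h a t else q (V t) * wexp V t)"

definition traj :: "(real \<Rightarrow> real) \<Rightarrow> state" where
  "traj V = (wcomp V, V)"

definition jtraj :: "(real \<Rightarrow> real) \<Rightarrow> real \<Rightarrow> real" where
  "jtraj V s = j (seg h (traj V) s)"

lemma admissibleD:
  assumes "admissible V V'"
  shows "\<And>t. t \<le> 0 \<Longrightarrow> V t = b t" and "continuous_on {-h..} V'"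
    and "\<And>t. t \<ge> -h \<Longrightarrow> (V has_real_derivative V' t) (at t within {-h..})"
    and "\<And>t. t \<ge> 0 \<Longrightarrow> V t \<ge> 0"
  using assms by (auto simp: admissible_def)

lemma admissible_continuous: "admissible V V' \<Longrightarrow> continuous_on {-h..} V"
  by (rule DERIV_continuous_on[of _ _ V']) (auto dest: admissibleD)

lemma admissible_nonneg: "admissible V V' \<Longrightarrow> V t \<ge> 0"
  using admissibleD(1,4)[of V V' t] b_nonneg[of t] by (cases "t \<le> 0") auto

lemma admissible_q_continuous:
  assumes "admissible V V'"
  shows "continuous_on {0..} (\<lambda>s. q (V s))"
proof (rule continuous_on_compose2[OF q_continuous])
  show "continuous_on {0..} V"
    by (rule continuous_on_subset[OF admissible_continuous[OF assms]]) (use h_pos in auto)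
  show "V ` {0..} \<subseteq> {Rm<..}"
    using admissible_nonneg[OF assms] Rm_neg by (auto intro: less_le_trans)
qed

lemma wexp_has_derivative:
  assumes "admissible V V'" "t \<ge> 0"
  shows "(wexp V has_real_derivative q (V t) * wexp V t) (at t within {0..})"
proof -
  have "((\<lambda>t. integral {0..t} (\<lambda>s. q (V s))) has_real_derivative q (V t)) (at t within {0..})"
    by (rule integral_has_real_derivative_atLeast[OF admissible_q_continuous[OF assms(1)] assms(2)])
  from DERIV_cmult[OF DERIV_chain2[OF DERIV_exp this], of "a 0"] show ?thesis
    unfolding wexp_def[abs_def] by (simp add: algebra_simps)
qed

lemma wcomp_has_derivative:
  assumes "admissible V V'"
  shows "\<And>t. t \<ge> -h \<Longrightarrow> (wcomp V has_real_derivative wcomp' V t) (at t within {-h..})"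
    and "continuous_on {-h..} (wcomp' V)"
proof -
  have "continuous_on {0..} (wexp V)"
    by (rule DERIV_continuous_on) (use wexp_has_derivative[OF assms] in auto)
  then have "continuous_on {0..} (\<lambda>t. q (V t) * wexp V t)"
    by (intro continuous_intros admissible_q_continuous[OF assms])
  note glued = piecewise_has_real_derivative[OF _ C1fun_dr(2)[OF h_pos a_C1] C1fun_dr(1)[OF h_pos a_C1]
      wexp_has_derivative[OF assms] this]
  have "dr h a 0 = q (V 0) * wexp V 0" using a_compat admissibleD(1)[OF assms, of 0] by (simp add: wexp_def)
  with glued h_pos show "\<And>t. t \<ge> -h \<Longrightarrow> (wcomp V has_real_derivative wcomp' V t) (at t within {-h..})"
    and "continuous_on {-h..} (wcomp' V)"
    unfolding wcomp_def[abs_def] wcomp'_def[abs_def] by (simp_all add: wexp_def)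
qed

lemma wcomp_continuous: "admissible V V' \<Longrightarrow> continuous_on {-h..} (wcomp V)"
  by (rule DERIV_continuous_on[of _ _ "wcomp' V"]) (use wcomp_has_derivative in auto)

lemma wexp_nonneg: "wexp V t \<ge> 0"
  using a_nonneg[of 0] by (simp add: wexp_def)

lemma wcomp_nonneg: "wcomp V t \<ge> 0"
  using a_nonneg[of t] wexp_nonneg by (simp add: wcomp_def)

lemma fst_seg_traj: "fst (seg h (traj V) t) = (\<lambda>s. if s \<in> {-h..0} then wcomp V (t+s) else 0)"
  and snd_seg_traj: "snd (seg h (traj V) t) = (\<lambda>s. if s \<in> {-h..0} then V (t+s) else 0)"
  unfolding seg_def traj_def fst_conv snd_conv by (rule refl)+

lemma seg_traj_0_apply: "fst (seg h (traj V) t) 0 = wcomp V t" "snd (seg h (traj V) t) 0 = V t"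
  using h_pos by (simp_all add: fst_seg_traj snd_seg_traj)

lemma seg_traj_0: "admissible V V' \<Longrightarrow> seg h (traj V) 0 = (a, b)"
  using admissibleD(1)[of V V'] C1fun_zero_out[OF a_C1] C1fun_zero_out[OF b_C1]
  by (auto simp: seg_def traj_def wcomp_def fun_eq_iff)

lemma seg_traj:
  assumes "admissible V V'" "t \<ge> 0"
  shows seg_traj_Uplus: "seg h (traj V) t \<in> Uplus h"
    and dr_fst_seg_traj: "\<And>\<theta>. \<theta> \<in> {-h..0} \<Longrightarrow> dr h (fst (seg h (traj V) t)) \<theta> = wcomp' V (t+\<theta>)"
    and dr_snd_seg_traj: "\<And>\<theta>. \<theta> \<in> {-h..0} \<Longrightarrow> dr h (snd (seg h (traj V) t)) \<theta> = V' (t+\<theta>)"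
proof -
  note W = C1fun_segment[OF h_pos assms(2) wcomp_has_derivative[OF assms(1)]]
  note V = C1fun_segment[OF h_pos assms(2) admissibleD(3,2)[OF assms(1)]]
  show "seg h (traj V) t \<in> Uplus h"
    using W(1) V(1) wcomp_nonneg admissible_nonneg[OF assms(1)]
    by (auto simp: Uplus_def C1p_def fst_seg_traj snd_seg_traj)
  show "\<And>\<theta>. \<theta> \<in> {-h..0} \<Longrightarrow> dr h (fst (seg h (traj V) t)) \<theta> = wcomp' V (t+\<theta>)"
    unfolding fst_seg_traj by (rule W(2))
  show "\<And>\<theta>. \<theta> \<in> {-h..0} \<Longrightarrow> dr h (snd (seg h (traj V) t)) \<theta> = V' (t+\<theta>)"
    unfolding snd_seg_traj by (rule V(2))
qed

lemma jtraj_nonneg: "admissible V V' \<Longrightarrow> s \<ge> 0 \<Longrightarrow> jtraj V s \<ge> 0"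
  unfolding jtraj_def by (rule j_nonneg, rule seg_traj_Uplus)

lemma jtraj_0: "admissible V V' \<Longrightarrow> jtraj V 0 = j (a, b)"
  unfolding jtraj_def using seg_traj_0 by simp

lemma psub_seg:
  assumes "\<theta> \<in> {-h..0}"
  shows "fst (psub (seg h x s) (seg h y t)) \<theta> = fst x (s+\<theta>) - fst y (t+\<theta>)"
    and "snd (psub (seg h x s) (seg h y t)) \<theta> = snd x (s+\<theta>) - snd y (t+\<theta>)"
  using assms by (auto simp: psub_def seg_def)

lemma norms_seg_traj_le:
  assumes V: "admissible V V'" and t: "t \<in> {0..T}"
    and W: "\<And>r. r \<in> {-h..T} \<Longrightarrow> \<bar>wcomp V r\<bar> \<le> M \<and> \<bar>wcomp' V r\<bar> \<le> M"
  shows "n1 h (fst (seg h (traj V) t)) \<le> 2 * M"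
    and "(\<And>r. r \<in> {-h..T} \<Longrightarrow> \<bar>V r\<bar> \<le> M \<and> \<bar>V' r\<bar> \<le> M) \<Longrightarrow> n1p h (seg h (traj V) t) \<le> 4 * M"
proof -
  have tt: "t + \<theta> \<in> {-h..T}" if "\<theta> \<in> {-h..0}" for \<theta> using that t by auto
  have h0: "h \<ge> 0" using h_pos by simp
  note dr = dr_fst_seg_traj[OF V] dr_snd_seg_traj[OF V]
  have "n0 h (fst (seg h (traj V) t)) \<le> M"
    by (rule n0_le[OF h0]) (use W tt in \<open>auto simp: fst_seg_traj\<close>)
  moreover have "n0 h (dr h (fst (seg h (traj V) t))) \<le> M"
    by (rule n0_le[OF h0]) (use W tt dr t in auto)
  ultimately show "n1 h (fst (seg h (traj V) t)) \<le> 2 * M" unfolding n1_def by simp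
  assume B: "\<And>r. r \<in> {-h..T} \<Longrightarrow> \<bar>V r\<bar> \<le> M \<and> \<bar>V' r\<bar> \<le> M"
  have "n0p h (seg h (traj V) t) \<le> 2 * M"
  proof (rule n0p_le[OF h0])
    fix \<theta> assume th: "\<theta> \<in> {-h..0}"
    then show "\<bar>fst (seg h (traj V) t) \<theta>\<bar> + \<bar>snd (seg h (traj V) t) \<theta>\<bar> \<le> 2 * M"
      using W[OF tt[OF th]] B[OF tt[OF th]] unfolding fst_seg_traj snd_seg_traj by simp
  qed
  moreover have "n0p h (dr h (fst (seg h (traj V) t)), dr h (snd (seg h (traj V) t))) \<le> 2 * M"
  proof (rule n0p_le[OF h0])
    fix \<theta> assume th: "\<theta> \<in> {-h..0}"
    have "dr h (fst (seg h (traj V) t)) \<theta> = wcomp' V (t+\<theta>)" "dr h (snd (seg h (traj V) t)) \<theta> = V' (t+\<theta>)"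
      using dr th t by auto
    then show "\<bar>fst (dr h (fst (seg h (traj V) t)), dr h (snd (seg h (traj V) t))) \<theta>\<bar> +
        \<bar>snd (dr h (fst (seg h (traj V) t)), dr h (snd (seg h (traj V) t))) \<theta>\<bar> \<le> 2 * M"
      using W[OF tt[OF th]] B[OF tt[OF th]] by simp
  qed
  ultimately show "n1p h (seg h (traj V) t) \<le> 4 * M" unfolding n1p_def by simp
qed

lemma j_lipschitz_on_n1p_ball:
  obtains L where "L \<ge> 0" "\<And>\<phi> \<xi> E. \<phi> \<in> Uplus h \<Longrightarrow> \<xi> \<in> Uplus h \<Longrightarrow> n1p h \<phi> \<le> M \<Longrightarrow> n1p h \<xi> \<le> M \<Longrightarrow>
     (\<And>\<theta>. \<theta> \<in> {-h..0} \<Longrightarrow> \<bar>fst (psub \<phi> \<xi>) \<theta>\<bar> + \<bar>snd (psub \<phi> \<xi>) \<theta>\<bar> \<le> E) \<Longrightarrow>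
     \<bar>j \<phi> - j \<xi>\<bar> \<le> L * E"
proof -
  have "sLb h (Uplus h) j" using H1 by (simp add: H1_def)
  then have sLb: "\<And>B. B \<subseteq> Uplus h \<Longrightarrow> (\<exists>M. \<forall>\<phi>\<in>B. n1p h \<phi> \<le> M) \<Longrightarrow>
      (\<exists>L. \<forall>\<phi>\<in>B. \<forall>\<xi>\<in>B. \<bar>j \<phi> - j \<xi>\<bar> \<le> L * n0p h (psub \<phi> \<xi>))"
    unfolding sLb_def by blast
  define B where "B = {\<phi>\<in>Uplus h. n1p h \<phi> \<le> M}"
  have "B \<subseteq> Uplus h" "\<exists>M'. \<forall>\<phi>\<in>B. n1p h \<phi> \<le> M'" by (auto simp: B_def)
  from sLb[OF this] obtain L where L: "\<forall>\<phi>\<in>B. \<forall>\<xi>\<in>B. \<bar>j \<phi> - j \<xi>\<bar> \<le> L * n0p h (psub \<phi> \<xi>)"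
    by blast
  show ?thesis
  proof (rule that[of "max L 0"])
    fix \<phi> \<xi> E assume \<phi>\<xi>: "\<phi> \<in> Uplus h" "\<xi> \<in> Uplus h" "n1p h \<phi> \<le> M" "n1p h \<xi> \<le> M"
      and E: "\<And>\<theta>. \<theta> \<in> {-h..0} \<Longrightarrow> \<bar>fst (psub \<phi> \<xi>) \<theta>\<bar> + \<bar>snd (psub \<phi> \<xi>) \<theta>\<bar> \<le> E"
    have h0: "h \<ge> 0" using h_pos by simp
    have "\<phi> \<in> B" "\<xi> \<in> B" using \<phi>\<xi> by (simp_all add: B_def)
    then have "\<bar>j \<phi> - j \<xi>\<bar> \<le> L * n0p h (psub \<phi> \<xi>)" using L by blast
    also have "\<dots> \<le> max L 0 * n0p h (psub \<phi> \<xi>)"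
      using n0p_nonneg[OF h0 E] by (intro mult_right_mono) auto
    also have "\<dots> \<le> max L 0 * E" using n0p_le[OF h0 E] by (intro mult_left_mono) auto
    finally show "\<bar>j \<phi> - j \<xi>\<bar> \<le> max L 0 * E" .
  qed auto
qed

lemma admissible_bounded_on:
  assumes V: "admissible V V'"
  obtains M where "\<And>r. r \<in> {-h..T} \<Longrightarrow> \<bar>wcomp V r\<bar> \<le> M \<and> \<bar>wcomp' V r\<bar> \<le> M \<and> \<bar>V r\<bar> \<le> M \<and> \<bar>V' r\<bar> \<le> M"
proof -
  have sub: "{-h..T} \<subseteq> {-h..}" by auto
  obtain M1 where "M1 \<ge> 0" "\<And>r. r \<in> {-h..T} \<Longrightarrow> \<bar>wcomp V r\<bar> \<le> M1"
    by (fact continuous_on_Icc_abs_bound[OF continuous_on_subset[OF wcomp_continuous[OF V] sub]])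
  moreover obtain M2 where "M2 \<ge> 0" "\<And>r. r \<in> {-h..T} \<Longrightarrow> \<bar>wcomp' V r\<bar> \<le> M2"
    by (fact continuous_on_Icc_abs_bound[OF continuous_on_subset[OF wcomp_has_derivative(2)[OF V] sub]])
  moreover obtain M3 where "M3 \<ge> 0" "\<And>r. r \<in> {-h..T} \<Longrightarrow> \<bar>V r\<bar> \<le> M3"
    by (fact continuous_on_Icc_abs_bound[OF continuous_on_subset[OF admissible_continuous[OF V] sub]])
  moreover obtain M4 where "M4 \<ge> 0" "\<And>r. r \<in> {-h..T} \<Longrightarrow> \<bar>V' r\<bar> \<le> M4"
    by (fact continuous_on_Icc_abs_bound[OF continuous_on_subset[OF admissibleD(2)[OF V] sub]])
  ultimately show ?thesis
    by (intro that[of "M1 + M2 + M3 + M4"] conjI) (meson add_increasing add_increasing2 order_trans)+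
qed

lemma jtraj_lipschitz_on:
  obtains L where "L \<ge> 0" "\<And>U U' V V' s s' E. admissible U U' \<Longrightarrow> admissible V V' \<Longrightarrow>
      (\<And>r. r \<in> {-h..T} \<Longrightarrow> \<bar>wcomp U r\<bar> \<le> M \<and> \<bar>wcomp' U r\<bar> \<le> M \<and> \<bar>U r\<bar> \<le> M \<and> \<bar>U' r\<bar> \<le> M) \<Longrightarrow>
      (\<And>r. r \<in> {-h..T} \<Longrightarrow> \<bar>wcomp V r\<bar> \<le> M \<and> \<bar>wcomp' V r\<bar> \<le> M \<and> \<bar>V r\<bar> \<le> M \<and> \<bar>V' r\<bar> \<le> M) \<Longrightarrow>
      s \<in> {0..T} \<Longrightarrow> s' \<in> {0..T} \<Longrightarrow>
      (\<And>\<theta>. \<theta> \<in> {-h..0} \<Longrightarrow> \<bar>wcomp U (s+\<theta>) - wcomp V (s'+\<theta>)\<bar> + \<bar>U (s+\<theta>) - V (s'+\<theta>)\<bar> \<le> E) \<Longrightarrow>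
      \<bar>jtraj U s - jtraj V s'\<bar> \<le> L * E"
proof -
  obtain L where L0: "L \<ge> 0" and L: "\<And>\<phi> \<xi> E. \<phi> \<in> Uplus h \<Longrightarrow> \<xi> \<in> Uplus h \<Longrightarrow> n1p h \<phi> \<le> 4 * M \<Longrightarrow>
     n1p h \<xi> \<le> 4 * M \<Longrightarrow> (\<And>\<theta>. \<theta> \<in> {-h..0} \<Longrightarrow> \<bar>fst (psub \<phi> \<xi>) \<theta>\<bar> + \<bar>snd (psub \<phi> \<xi>) \<theta>\<bar> \<le> E) \<Longrightarrow>
     \<bar>j \<phi> - j \<xi>\<bar> \<le> L * E"
    by (fact j_lipschitz_on_n1p_ball)
  show ?thesis
  proof (rule that[OF L0])
    fix U U' V V' s s' E assume U: "admissible U U'" and V: "admissible V V'" and s: "s \<in> {0..T}" "s' \<in> {0..T}"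
      and MU: "\<And>r. r \<in> {-h..T} \<Longrightarrow> \<bar>wcomp U r\<bar> \<le> M \<and> \<bar>wcomp' U r\<bar> \<le> M \<and> \<bar>U r\<bar> \<le> M \<and> \<bar>U' r\<bar> \<le> M"
      and MV: "\<And>r. r \<in> {-h..T} \<Longrightarrow> \<bar>wcomp V r\<bar> \<le> M \<and> \<bar>wcomp' V r\<bar> \<le> M \<and> \<bar>V r\<bar> \<le> M \<and> \<bar>V' r\<bar> \<le> M"
      and E: "\<And>\<theta>. \<theta> \<in> {-h..0} \<Longrightarrow> \<bar>wcomp U (s+\<theta>) - wcomp V (s'+\<theta>)\<bar> + \<bar>U (s+\<theta>) - V (s'+\<theta>)\<bar> \<le> E"
    show "\<bar>jtraj U s - jtraj V s'\<bar> \<le> L * E"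
      unfolding jtraj_def
    proof (rule L)
      show "seg h (traj U) s \<in> Uplus h" "seg h (traj V) s' \<in> Uplus h"
        using seg_traj_Uplus U V s by auto
      show "n1p h (seg h (traj U) s) \<le> 4 * M" "n1p h (seg h (traj V) s') \<le> 4 * M"
        using norms_seg_traj_le(2)[OF U s(1)] norms_seg_traj_le(2)[OF V s(2)] MU MV by blast+
      show "\<bar>fst (psub (seg h (traj U) s) (seg h (traj V) s')) \<theta>\<bar> +
          \<bar>snd (psub (seg h (traj U) s) (seg h (traj V) s')) \<theta>\<bar> \<le> E" if "\<theta> \<in> {-h..0}" for \<theta>
        using E[OF that] psub_seg[OF that] by (simp add: traj_def)
    qed
  qed
qed

lemma uniformly_continuous_on_segments:
  fixes f :: "real \<Rightarrow> real"
  assumes f: "continuous_on {-h..} f" and e: "e > 0"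
  obtains d where "d > 0"
    "\<And>s s' \<theta>. s \<in> {0..T} \<Longrightarrow> s' \<in> {0..T} \<Longrightarrow> dist s s' < d \<Longrightarrow> \<theta> \<in> {-h..0} \<Longrightarrow>
      \<bar>f (s+\<theta>) - f (s'+\<theta>)\<bar> < e"
proof -
  have "uniformly_continuous_on {-h..T} f"
    by (rule compact_uniformly_continuous[OF continuous_on_subset[OF f]]) auto
  then obtain d where d: "d > 0" "\<And>x x'. x \<in> {-h..T} \<Longrightarrow> x' \<in> {-h..T} \<Longrightarrow> dist x' x < d \<Longrightarrow>
      dist (f x') (f x) < e"
    using e unfolding uniformly_continuous_on_def by metis
  show ?thesis
  proof (rule that[OF d(1)])
    fix s s' \<theta> assume "s \<in> {0..T}" "s' \<in> {0..T}" "dist s s' < d" "\<theta> \<in> {-h..0}"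
    then show "\<bar>f (s+\<theta>) - f (s'+\<theta>)\<bar> < e"
      using d(2)[of "s'+\<theta>" "s+\<theta>"] by (simp add: dist_real_def)
  qed
qed

lemma jtraj_continuous:
  assumes V: "admissible V V'"
  shows "continuous_on {0..} (jtraj V)"
proof (rule continuous_on_atLeastI)
  fix T :: real assume "T > 0"
  obtain M where M: "\<And>r. r \<in> {-h..T} \<Longrightarrow> \<bar>wcomp V r\<bar> \<le> M \<and> \<bar>wcomp' V r\<bar> \<le> M \<and> \<bar>V r\<bar> \<le> M \<and> \<bar>V' r\<bar> \<le> M"
    by (fact admissible_bounded_on[OF V])
  obtain L where L0: "L \<ge> 0" and L: "\<And>U U' V V' s s' E. admissible U U' \<Longrightarrow> admissible V V' \<Longrightarrow>
      (\<And>r. r \<in> {-h..T} \<Longrightarrow> \<bar>wcomp U r\<bar> \<le> M \<and> \<bar>wcomp' U r\<bar> \<le> M \<and> \<bar>U r\<bar> \<le> M \<and> \<bar>U' r\<bar> \<le> M) \<Longrightarrow>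
      (\<And>r. r \<in> {-h..T} \<Longrightarrow> \<bar>wcomp V r\<bar> \<le> M \<and> \<bar>wcomp' V r\<bar> \<le> M \<and> \<bar>V r\<bar> \<le> M \<and> \<bar>V' r\<bar> \<le> M) \<Longrightarrow>
      s \<in> {0..T} \<Longrightarrow> s' \<in> {0..T} \<Longrightarrow>
      (\<And>\<theta>. \<theta> \<in> {-h..0} \<Longrightarrow> \<bar>wcomp U (s+\<theta>) - wcomp V (s'+\<theta>)\<bar> + \<bar>U (s+\<theta>) - V (s'+\<theta>)\<bar> \<le> E) \<Longrightarrow>
      \<bar>jtraj U s - jtraj V s'\<bar> \<le> L * E"
    by (fact jtraj_lipschitz_on)
  show "continuous_on {0..T} (jtraj V)" unfolding continuous_on_iff
  proof (intro ballI allI impI)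
    fix s0 e :: real assume s0: "s0 \<in> {0..T}" and e: "e > 0"
    define \<eta> where "\<eta> = e / (2 * (L + 1))"
    have "\<eta> > 0" using e L0 by (simp add: \<eta>_def)
    from uniformly_continuous_on_segments[OF wcomp_continuous[OF V] this]
      uniformly_continuous_on_segments[OF admissible_continuous[OF V] this]
    obtain d1 d2 where d: "d1 > 0" "d2 > 0"
      and d1: "\<And>s s' \<theta>. s \<in> {0..T} \<Longrightarrow> s' \<in> {0..T} \<Longrightarrow> dist s s' < d1 \<Longrightarrow> \<theta> \<in> {-h..0} \<Longrightarrow>
        \<bar>wcomp V (s+\<theta>) - wcomp V (s'+\<theta>)\<bar> < \<eta>"
      and d2: "\<And>s s' \<theta>. s \<in> {0..T} \<Longrightarrow> s' \<in> {0..T} \<Longrightarrow> dist s s' < d2 \<Longrightarrow> \<theta> \<in> {-h..0} \<Longrightarrow>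
        \<bar>V (s+\<theta>) - V (s'+\<theta>)\<bar> < \<eta>"
      by metis
    have "dist (jtraj V s) (jtraj V s0) < e" if s: "s \<in> {0..T}" "dist s s0 < min d1 d2" for s
    proof -
      have E: "\<bar>wcomp V (s+\<theta>) - wcomp V (s0+\<theta>)\<bar> + \<bar>V (s+\<theta>) - V (s0+\<theta>)\<bar> \<le> 2 * \<eta>"
        if "\<theta> \<in> {-h..0}" for \<theta>
        using d1[OF s(1) s0 _ that] d2[OF s(1) s0 _ that] s(2) by fastforce
      have "\<bar>jtraj V s - jtraj V s0\<bar> \<le> L * (2 * \<eta>)" using L[OF V V M M s(1) s0 E] .
      also have "L * (2 * \<eta>) < e" using L0 e by (simp add: \<eta>_def field_simps)
      finally show ?thesis by (simp add: dist_real_def)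
    qed
    then show "\<exists>d>0. \<forall>s\<in>{0..T}. dist s s0 < d \<longrightarrow> dist (jtraj V s) (jtraj V s0) < e"
      using d by (intro exI[of _ "min d1 d2"]) auto
  qed
qed

section \<open>The Picard map and its estimates\<close>

text \<open>Variation of constants: \<open>voc g\<close> solves \<open>v' = g - \<mu> v\<close>, \<open>v(0) = b(0)\<close>; the \<open>v\<close>-equation
  becomes the fixed point problem \<open>V = picard V\<close>.\<close>

definition voc :: "(real \<Rightarrow> real) \<Rightarrow> real \<Rightarrow> real" where
  "voc g t = exp (- \<mu> * t) * (b 0 + integral {0..t} (\<lambda>s. exp (\<mu> * s) * g s))"

definition picard :: "(real \<Rightarrow> real) \<Rightarrow> real \<Rightarrow> real" where
  "picard V t = (if t \<le> 0 then b t else voc (jtraj V) t)"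

definition picard' :: "(real \<Rightarrow> real) \<Rightarrow> real \<Rightarrow> real" where
  "picard' V t = (if t \<le> 0 then dr h b t else jtraj V t - \<mu> * voc (jtraj V) t)"

lemma voc_0: "voc g 0 = b 0"
  by (simp add: voc_def)

lemma voc_has_derivative:
  assumes g: "continuous_on {0..} g" and t: "t \<ge> 0"
  shows "(voc g has_real_derivative g t - \<mu> * voc g t) (at t within {0..})"
proof -
  have "continuous_on {0..} (\<lambda>s. exp (\<mu> * s) * g s)" by (intro continuous_intros g)
  from integral_has_real_derivative_atLeast[OF this t]
  have "(voc g has_real_derivative exp (- \<mu> * t) * (- \<mu>) * (b 0 + integral {0..t} (\<lambda>s. exp (\<mu> * s) * g s))
      + (exp (\<mu> * t) * g t) * exp (- \<mu> * t)) (at t within {0..})"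
    unfolding voc_def[abs_def] by (auto intro!: derivative_eq_intros)
  moreover have "exp (\<mu> * t) * exp (- \<mu> * t) = 1" by (simp flip: exp_add)
  ultimately show ?thesis by (simp add: voc_def algebra_simps)
qed

lemma voc_continuous: "continuous_on {0..} g \<Longrightarrow> continuous_on {0..} (voc g)"
  by (rule DERIV_continuous_on) (use voc_has_derivative in auto)

lemma voc_nonneg:
  assumes g: "continuous_on {0..} g" and nonneg: "\<And>s. s \<ge> 0 \<Longrightarrow> g s \<ge> 0" and t: "t \<ge> 0"
  shows "voc g t \<ge> 0"
proof -
  have "continuous_on {0..t} (\<lambda>s. exp (\<mu> * s) * g s)"
    by (intro continuous_intros continuous_on_subset[OF g]) auto
  then have "0 \<le> integral {0..t} (\<lambda>s. exp (\<mu> * s) * g s)"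
    by (rule integral_nonneg[OF integrable_continuous_real]) (use nonneg in auto)
  then show ?thesis unfolding voc_def using b_nonneg[of 0] by simp
qed

text \<open>The damping factor \<open>exp (- \<mu> (t - s)) \<le> 1\<close> only helps.\<close>

lemma voc_diff_le:
  assumes g1: "continuous_on {0..} g1" and g2: "continuous_on {0..} g2" and t: "t \<ge> 0"
    and f: "f integrable_on {0..t}" and le: "\<And>s. s \<in> {0..t} \<Longrightarrow> \<bar>g1 s - g2 s\<bar> \<le> f s"
  shows "\<bar>voc g1 t - voc g2 t\<bar> \<le> integral {0..t} f"
proof -
  let ?d = "\<lambda>s. exp (\<mu> * s) * g1 s - exp (\<mu> * s) * g2 s"
  have i: "(\<lambda>s. exp (\<mu> * s) * g s) integrable_on {0..t}" if "continuous_on {0..} g" for g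
    by (intro integrable_continuous_real continuous_intros continuous_on_subset[OF that]) auto
  have "\<bar>integral {0..t} ?d\<bar> \<le> integral {0..t} (\<lambda>s. exp (\<mu> * t) * f s)"
    unfolding real_norm_def[symmetric]
  proof (rule integral_norm_bound_integral)
    show "?d integrable_on {0..t}" by (intro integrable_diff i g1 g2)
    show "(\<lambda>s. exp (\<mu> * t) * f s) integrable_on {0..t}" using integrable_on_cmult_left[OF f, of "exp (\<mu> * t)"] by simp
    fix s assume s: "s \<in> {0..t}"
    have "exp (\<mu> * s) \<le> exp (\<mu> * t)" using s mu_nonneg by (auto intro: mult_left_mono)
    then have "exp (\<mu> * s) * \<bar>g1 s - g2 s\<bar> \<le> exp (\<mu> * t) * f s"
      using le[OF s] by (intro mult_mono) auto
    then show "norm (?d s) \<le> exp (\<mu> * t) * f s"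
      by (simp add: abs_mult flip: right_diff_distrib)
  qed
  moreover have "integral {0..t} ?d =
      integral {0..t} (\<lambda>s. exp (\<mu> * s) * g1 s) - integral {0..t} (\<lambda>s. exp (\<mu> * s) * g2 s)"
    by (intro integral_diff i g1 g2)
  ultimately have "exp (- \<mu> * t) * \<bar>integral {0..t} (\<lambda>s. exp (\<mu> * s) * g1 s) -
      integral {0..t} (\<lambda>s. exp (\<mu> * s) * g2 s)\<bar> \<le> exp (- \<mu> * t) * (exp (\<mu> * t) * integral {0..t} f)"
    by (intro mult_left_mono) auto
  also have "\<dots> = integral {0..t} f" by (simp flip: mult.assoc exp_add)
  finally show ?thesis by (simp add: voc_def abs_mult flip: right_diff_distrib)
qed

lemma picard_admissible:
  assumes V: "admissible V V'"
  shows "admissible (picard V) (picard' V)"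
proof -
  note g = jtraj_continuous[OF V]
  have "continuous_on {0..} (\<lambda>t. jtraj V t - \<mu> * voc (jtraj V) t)"
    by (intro continuous_intros g voc_continuous)
  note glued = piecewise_has_real_derivative[OF _ C1fun_dr(2)[OF h_pos b_C1] C1fun_dr(1)[OF h_pos b_C1]
      voc_has_derivative[OF g] this]
  have "dr h b 0 = jtraj V 0 - \<mu> * voc (jtraj V) 0" using b_compat jtraj_0[OF V] by (simp add: voc_0)
  with glued h_pos have "\<And>t. t \<ge> -h \<Longrightarrow> (picard V has_real_derivative picard' V t) (at t within {-h..})"
    and "continuous_on {-h..} (picard' V)"
    unfolding picard_def[abs_def] picard'_def[abs_def] by (simp_all add: voc_0)
  moreover have "picard V t \<ge> 0" if "t \<ge> 0" for t
    using voc_nonneg[OF g jtraj_nonneg[OF V]] b_nonneg that by (simp add: picard_def)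
  ultimately show ?thesis unfolding admissible_def by (simp add: picard_def)
qed

text \<open>A priori bounds on \<open>[-h,T]\<close>, uniform over all admissible \<open>V\<close>: \<open>q\<close> is bounded, so \<open>w\<close>
  grows at most exponentially, and \<open>j\<close> is bounded as soon as the first component is.\<close>

lemma q_integral_le:
  assumes V: "admissible V V'" and Q: "\<And>x. x > Rm \<Longrightarrow> \<bar>q x\<bar> \<le> Q" and r: "r \<ge> 0"
  shows "(\<lambda>s. q (V s)) integrable_on {0..r}" and "integral {0..r} (\<lambda>s. q (V s)) \<le> Q * r"
proof -
  have "continuous_on {0..r} (\<lambda>s. q (V s))"
    by (rule continuous_on_subset[OF admissible_q_continuous[OF V]]) auto
  then show i: "(\<lambda>s. q (V s)) integrable_on {0..r}" by (rule integrable_continuous_real)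
  have "q (V s) \<le> Q" for s
    using Q[of "V s"] admissible_nonneg[OF V, of s] Rm_neg by (simp add: abs_le_iff)
  then have "integral {0..r} (\<lambda>s. q (V s)) \<le> integral {0..r} (\<lambda>s. Q)"
    by (intro integral_le i) auto
  then show "integral {0..r} (\<lambda>s. q (V s)) \<le> Q * r" using r by (simp add: mult.commute)
qed

lemma wcomp_bounded:
  assumes V: "admissible V V'" and Q0: "Q \<ge> 0" and Q: "\<And>x. x > Rm \<Longrightarrow> \<bar>q x\<bar> \<le> Q"
    and Ma: "\<And>\<theta>. \<theta> \<in> {-h..0} \<Longrightarrow> \<bar>a \<theta>\<bar> \<le> Ma \<and> \<bar>dr h a \<theta>\<bar> \<le> Ma" and Ma0: "Ma \<ge> 0"
    and r: "r \<in> {-h..T}"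
  shows "\<bar>wcomp V r\<bar> \<le> Ma + a 0 * exp (Q * T) * (1 + Q) \<and> \<bar>wcomp' V r\<bar> \<le> Ma + a 0 * exp (Q * T) * (1 + Q)"
proof (cases "r \<le> 0")
  case True
  then have "\<bar>a r\<bar> \<le> Ma \<and> \<bar>dr h a r\<bar> \<le> Ma" using Ma r by auto
  moreover have "a 0 * exp (Q * T) * (1 + Q) \<ge> 0" using a_nonneg[of 0] Q0 by simp
  ultimately show ?thesis using True by (simp add: wcomp_def wcomp'_def)
next
  case False
  then have r0: "r \<ge> 0" "r \<le> T" using r by auto
  have qV: "\<bar>q (V s)\<bar> \<le> Q" for s using Q admissible_nonneg[OF V, of s] Rm_neg by force
  have "integral {0..r} (\<lambda>s. q (V s)) \<le> Q * r" by (rule q_integral_le[OF V Q r0(1)])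
  also have "\<dots> \<le> Q * T" using r0 Q0 by (simp add: mult_left_mono)
  finally have w: "wexp V r \<le> a 0 * exp (Q * T)"
    using a_nonneg[of 0] by (auto simp: wexp_def intro: mult_left_mono)
  have "\<bar>q (V r) * wexp V r\<bar> \<le> Q * wexp V r"
    using qV wexp_nonneg by (simp add: abs_mult mult_right_mono)
  also have "\<dots> \<le> a 0 * exp (Q * T) * Q" using mult_left_mono[OF w Q0] by (simp add: mult.commute)
  finally show ?thesis
    using False Ma0 w wexp_nonneg[of V r] by (simp add: wcomp_def wcomp'_def distrib_left; linarith)
qed

lemma jtraj_bounded:
  obtains J where "J \<ge> 0" "\<And>V V' s. admissible V V' \<Longrightarrow>
      (\<And>r. r \<in> {-h..T} \<Longrightarrow> \<bar>wcomp V r\<bar> \<le> M \<and> \<bar>wcomp' V r\<bar> \<le> M) \<Longrightarrow> s \<in> {0..T} \<Longrightarrow> \<bar>jtraj V s\<bar> \<le> J"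
proof -
  define B1 where "B1 = {f. C1fun h f \<and> (\<forall>\<theta>\<in>{-h..0}. f \<theta> \<ge> 0) \<and> n1 h f \<le> 2 * M}"
  define B2 where "B2 = {g. C1fun h g \<and> (\<forall>\<theta>\<in>{-h..0}. g \<theta> \<ge> 0)}"
  have "B1 \<times> B2 \<subseteq> Uplus h" "\<exists>M'. \<forall>f\<in>B1. n1 h f \<le> M'"
    by (auto simp: B1_def B2_def Uplus_def C1p_def)
  with H1 obtain J where J: "\<forall>\<phi>\<in>B1 \<times> B2. \<bar>j \<phi>\<bar> \<le> J" unfolding H1_def by blast
  show ?thesis
  proof (rule that[of "max J 0"])
    fix V V' s assume V: "admissible V V'" and s: "s \<in> {0..T}"
      and M: "\<And>r. r \<in> {-h..T} \<Longrightarrow> \<bar>wcomp V r\<bar> \<le> M \<and> \<bar>wcomp' V r\<bar> \<le> M"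
    have "seg h (traj V) s \<in> Uplus h" using seg_traj_Uplus[OF V] s by auto
    then have "seg h (traj V) s \<in> B1 \<times> B2"
      using norms_seg_traj_le(1)[OF V s M] by (auto simp: B1_def B2_def Uplus_def C1p_def mem_Times_iff)
    then show "\<bar>jtraj V s\<bar> \<le> max J 0" using J by (force simp: jtraj_def)
  qed simp
qed

lemma picard_bounded:
  assumes V: "admissible V V'" and T: "T \<ge> 0" and J: "\<And>s. s \<in> {0..T} \<Longrightarrow> \<bar>jtraj V s\<bar> \<le> J"
    and Mb: "\<And>\<theta>. \<theta> \<in> {-h..0} \<Longrightarrow> \<bar>b \<theta>\<bar> \<le> Mb \<and> \<bar>dr h b \<theta>\<bar> \<le> Mb" and r: "r \<in> {-h..T}"
  shows "\<bar>picard V r\<bar> \<le> Mb + b 0 + J * T \<and> \<bar>picard' V r\<bar> \<le> Mb + J + \<mu> * (Mb + b 0 + J * T)"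
proof -
  have J0: "J \<ge> 0" using J[of 0] T by (meson abs_ge_zero atLeastAtMost_iff order_trans order_refl)
  have Mb0: "Mb \<ge> 0" using Mb[of 0] h_pos by (meson abs_ge_zero atLeastAtMost_iff order_trans neg_le_0_iff_le less_imp_le order_refl)
  have bJT: "b 0 + J * T \<ge> 0" using b_nonneg[of 0] J0 T by simp
  show ?thesis
  proof (cases "r \<le> 0")
    case True
    then show ?thesis
      using Mb[of r] r bJT J0 Mb0 mu_nonneg by (simp add: picard_def picard'_def add_increasing2)
  next
    case False
    then have r0: "r \<ge> 0" "r \<le> T" using r by auto
    note g = jtraj_continuous[OF V]
    have "\<bar>voc (jtraj V) r - voc (\<lambda>_. 0) r\<bar> \<le> integral {0..r} (\<lambda>_. J)"
      by (rule voc_diff_le[OF g _ r0(1)]) (use J r0 in auto)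
    moreover have "0 \<le> voc (\<lambda>_. 0) r" "voc (\<lambda>_. 0) r \<le> b 0"
    proof -
      have "exp (- \<mu> * r) \<le> 1" using mu_nonneg r0 by simp
      then show "0 \<le> voc (\<lambda>_. 0) r" "voc (\<lambda>_. 0) r \<le> b 0"
        using b_nonneg[of 0] by (simp_all add: voc_def mult_left_le_one_le)
    qed
    moreover have "integral {0..r} (\<lambda>_. J) \<le> J * T" using r0 J0 by (simp add: mult_left_mono mult.commute)
    ultimately have v: "\<bar>voc (jtraj V) r\<bar> \<le> b 0 + J * T" by linarith
    then have "\<bar>\<mu> * voc (jtraj V) r\<bar> \<le> \<mu> * (Mb + b 0 + J * T)"
      using mu_nonneg Mb0 by (simp add: abs_mult mult_left_mono)
    then show ?thesis
      using v False J[of r] r0 Mb0 by (simp add: picard_def picard'_def)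
  qed
qed

lemma init_bounded:
  obtains Ma where "Ma \<ge> 0"
    "\<And>\<theta>. \<theta> \<in> {-h..0} \<Longrightarrow> \<bar>a \<theta>\<bar> \<le> Ma \<and> \<bar>dr h a \<theta>\<bar> \<le> Ma"
    "\<And>\<theta>. \<theta> \<in> {-h..0} \<Longrightarrow> \<bar>b \<theta>\<bar> \<le> Ma \<and> \<bar>dr h b \<theta>\<bar> \<le> Ma"
proof -
  obtain M1 where "M1 \<ge> 0" "\<And>\<theta>. \<theta> \<in> {-h..0} \<Longrightarrow> \<bar>a \<theta>\<bar> \<le> M1"
    by (fact continuous_on_Icc_abs_bound[OF C1fun_continuous_on[OF h_pos a_C1]])
  moreover obtain M2 where "M2 \<ge> 0" "\<And>\<theta>. \<theta> \<in> {-h..0} \<Longrightarrow> \<bar>dr h a \<theta>\<bar> \<le> M2"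
    by (fact continuous_on_Icc_abs_bound[OF C1fun_dr(1)[OF h_pos a_C1]])
  moreover obtain M3 where "M3 \<ge> 0" "\<And>\<theta>. \<theta> \<in> {-h..0} \<Longrightarrow> \<bar>b \<theta>\<bar> \<le> M3"
    by (fact continuous_on_Icc_abs_bound[OF C1fun_continuous_on[OF h_pos b_C1]])
  moreover obtain M4 where "M4 \<ge> 0" "\<And>\<theta>. \<theta> \<in> {-h..0} \<Longrightarrow> \<bar>dr h b \<theta>\<bar> \<le> M4"
    by (fact continuous_on_Icc_abs_bound[OF C1fun_dr(1)[OF h_pos b_C1]])
  ultimately show ?thesis
    by (intro that[of "M1 + M2 + M3 + M4"] conjI) (meson add_increasing add_increasing2 order_trans)+
qed

lemma wcomp_apriori_bound:
  obtains MW where "MW \<ge> 0"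
    "\<And>V V' r. admissible V V' \<Longrightarrow> r \<in> {-h..T} \<Longrightarrow> \<bar>wcomp V r\<bar> \<le> MW \<and> \<bar>wcomp' V r\<bar> \<le> MW"
proof -
  obtain Q where Q0: "Q \<ge> 0" and Q: "\<And>x. x > Rm \<Longrightarrow> \<bar>q x\<bar> \<le> Q" by (fact q_bounded)
  obtain Ma where Ma0: "Ma \<ge> 0" and Ma: "\<And>\<theta>. \<theta> \<in> {-h..0} \<Longrightarrow> \<bar>a \<theta>\<bar> \<le> Ma \<and> \<bar>dr h a \<theta>\<bar> \<le> Ma"
    and "\<And>\<theta>. \<theta> \<in> {-h..0} \<Longrightarrow> \<bar>b \<theta>\<bar> \<le> Ma \<and> \<bar>dr h b \<theta>\<bar> \<le> Ma"
    by (fact init_bounded)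
  show ?thesis
  proof (rule that[of "Ma + a 0 * exp (Q * T) * (1 + Q)"])
    show "Ma + a 0 * exp (Q * T) * (1 + Q) \<ge> 0" using Ma0 a_nonneg[of 0] Q0 by simp
  qed (rule wcomp_bounded[OF _ Q0 Q Ma Ma0])
qed

lemma picard_apriori_bound:
  assumes T: "T \<ge> 0"
  obtains MV MD where "MV \<ge> 0" "MD \<ge> 0"
    "\<And>V V' r. admissible V V' \<Longrightarrow> r \<in> {-h..T} \<Longrightarrow> \<bar>picard V r\<bar> \<le> MV \<and> \<bar>picard' V r\<bar> \<le> MD"
proof -
  obtain Mb where Mb0: "Mb \<ge> 0"
    and "\<And>\<theta>. \<theta> \<in> {-h..0} \<Longrightarrow> \<bar>a \<theta>\<bar> \<le> Mb \<and> \<bar>dr h a \<theta>\<bar> \<le> Mb"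
    and Mb: "\<And>\<theta>. \<theta> \<in> {-h..0} \<Longrightarrow> \<bar>b \<theta>\<bar> \<le> Mb \<and> \<bar>dr h b \<theta>\<bar> \<le> Mb"
    by (fact init_bounded)
  obtain MW where "MW \<ge> 0"
    and MW: "\<And>V V' r. admissible V V' \<Longrightarrow> r \<in> {-h..T} \<Longrightarrow> \<bar>wcomp V r\<bar> \<le> MW \<and> \<bar>wcomp' V r\<bar> \<le> MW"
    by (fact wcomp_apriori_bound)
  obtain J where J0: "J \<ge> 0" and J: "\<And>V V' s. admissible V V' \<Longrightarrow>
      (\<And>r. r \<in> {-h..T} \<Longrightarrow> \<bar>wcomp V r\<bar> \<le> MW \<and> \<bar>wcomp' V r\<bar> \<le> MW) \<Longrightarrow> s \<in> {0..T} \<Longrightarrow> \<bar>jtraj V s\<bar> \<le> J"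
    by (fact jtraj_bounded)
  show ?thesis
  proof (rule that[of "Mb + b 0 + J * T" "Mb + J + \<mu> * (Mb + b 0 + J * T)"])
    show "Mb + b 0 + J * T \<ge> 0" "Mb + J + \<mu> * (Mb + b 0 + J * T) \<ge> 0"
      using Mb0 b_nonneg[of 0] J0 T mu_nonneg by simp_all
    fix V V' r assume V: "admissible V V'" and r: "r \<in> {-h..T}"
    show "\<bar>picard V r\<bar> \<le> Mb + b 0 + J * T \<and> \<bar>picard' V r\<bar> \<le> Mb + J + \<mu> * (Mb + b 0 + J * T)"
      using picard_bounded[OF V T J[OF V MW[OF V]] Mb r] .
  qed
qed

lemma q_integral_diff_le:
  assumes U: "admissible U U'" and V: "admissible V V'"
    and Lq0: "Lq \<ge> 0" and Lq: "\<And>x y. x \<in> {0..MV} \<Longrightarrow> y \<in> {0..MV} \<Longrightarrow> \<bar>q x - q y\<bar> \<le> Lq * \<bar>x - y\<bar>"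
    and UB: "\<And>r. r \<in> {0..T} \<Longrightarrow> U r \<le> MV" and VB: "\<And>r. r \<in> {0..T} \<Longrightarrow> V r \<le> MV"
    and lam: "lam \<ge> 1" and K0: "K \<ge> 0" and K: "\<And>r. r \<in> {0..T} \<Longrightarrow> \<bar>U r - V r\<bar> \<le> K * exp (lam * r)"
    and r: "r \<in> {0..T}"
  shows "\<bar>integral {0..r} (\<lambda>s. q (U s)) - integral {0..r} (\<lambda>s. q (V s))\<bar> \<le> Lq * K * exp (lam * r)"
proof -
  obtain Q where "Q \<ge> 0" "\<And>x. x > Rm \<Longrightarrow> \<bar>q x\<bar> \<le> Q" by (fact q_bounded)
  note iU = q_integral_le(1)[OF U this(2)] and iV = q_integral_le(1)[OF V this(2)]
  have "integral {0..r} (\<lambda>s. q (U s)) - integral {0..r} (\<lambda>s. q (V s)) = integral {0..r} (\<lambda>s. q (U s) - q (V s))"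
    using r by (intro integral_diff[symmetric] iU iV) auto
  also have "\<bar>\<dots>\<bar> \<le> integral {0..r} (\<lambda>s. Lq * K * exp (lam * s))"
    unfolding real_norm_def[symmetric] using r
  proof (intro integral_norm_bound_integral integrable_diff iU iV integral_exp_le(1) lam)
    fix s assume s: "s \<in> {0..r}"
    then have sT: "s \<in> {0..T}" using r by auto
    have "\<bar>q (U s) - q (V s)\<bar> \<le> Lq * \<bar>U s - V s\<bar>"
      by (rule Lq) (use admissible_nonneg[OF U, of s] admissible_nonneg[OF V, of s] UB[OF sT] VB[OF sT] in auto)
    also have "\<dots> \<le> Lq * (K * exp (lam * s))" by (rule mult_left_mono[OF K[OF sT] Lq0])
    finally show "norm (q (U s) - q (V s)) \<le> Lq * K * exp (lam * s)" by (simp add: mult.assoc)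
  qed (use Lq0 K0 in auto)
  also have "\<dots> \<le> Lq * K * exp (lam * r) / lam" by (rule integral_exp_le(2)) (use lam r Lq0 K0 in auto)
  also have "\<dots> \<le> Lq * K * exp (lam * r)"
    using divide_left_mono[of 1 lam "Lq * K * exp (lam * r)"] lam Lq0 K0 by simp
  finally show ?thesis .
qed

lemma wcomp_diff_le:
  assumes U: "admissible U U'" and V: "admissible V V'"
    and Q0: "Q \<ge> 0" and Q: "\<And>x. x > Rm \<Longrightarrow> \<bar>q x\<bar> \<le> Q"
    and Lq0: "Lq \<ge> 0" and Lq: "\<And>x y. x \<in> {0..MV} \<Longrightarrow> y \<in> {0..MV} \<Longrightarrow> \<bar>q x - q y\<bar> \<le> Lq * \<bar>x - y\<bar>"
    and UB: "\<And>r. r \<in> {0..T} \<Longrightarrow> U r \<le> MV" and VB: "\<And>r. r \<in> {0..T} \<Longrightarrow> V r \<le> MV"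
    and lam: "lam \<ge> 1" and K0: "K \<ge> 0" and K: "\<And>r. r \<in> {0..T} \<Longrightarrow> \<bar>U r - V r\<bar> \<le> K * exp (lam * r)"
    and r: "r \<in> {0..T}"
  shows "\<bar>wcomp U r - wcomp V r\<bar> \<le> a 0 * exp (Q * T) * Lq * K * exp (lam * r)"
proof (cases "r = 0")
  case True
  then show ?thesis using a_nonneg[of 0] Lq0 K0 by (simp add: wcomp_def)
next
  case False
  then have r0: "r > 0" "r \<le> T" using r by auto
  define IU where "IU = integral {0..r} (\<lambda>s. q (U s))"
  define IV where "IV = integral {0..r} (\<lambda>s. q (V s))"
  have "IU \<le> Q * T" "IV \<le> Q * T"
    using q_integral_le(2)[OF U Q, of r] q_integral_le(2)[OF V Q, of r] r0 mult_left_mono[OF r0(2) Q0]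
    by (auto simp: IU_def IV_def)
  then have mx: "exp (max IU IV) \<le> exp (Q * T)" by simp
  have dI: "\<bar>IU - IV\<bar> \<le> Lq * K * exp (lam * r)"
    unfolding IU_def IV_def by (rule q_integral_diff_le[OF U V Lq0 Lq UB VB lam K0 K r])
  have "\<bar>wcomp U r - wcomp V r\<bar> = a 0 * \<bar>exp IU - exp IV\<bar>"
    using r0 a_nonneg[of 0] by (simp add: wcomp_def wexp_def IU_def IV_def abs_mult flip: right_diff_distrib)
  also have "\<dots> \<le> a 0 * (exp (max IU IV) * \<bar>IU - IV\<bar>)"
    by (rule mult_left_mono[OF abs_exp_diff_le a_nonneg])
  also have "\<dots> \<le> a 0 * (exp (Q * T) * (Lq * K * exp (lam * r)))"
    by (intro mult_left_mono mult_mono mx dI a_nonneg) auto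
  finally show ?thesis by (simp add: mult.assoc)
qed

text \<open>Before time \<open>0\<close> both trajectories coincide, and the weight \<open>exp (lam r)\<close> is increasing.\<close>

lemma traj_diff_weighted_le:
  assumes U: "admissible U U'" and V: "admissible V V'" and C: "C \<ge> 0" and K0: "K \<ge> 0" and lam: "lam \<ge> 0"
    and W: "\<And>r. r \<in> {0..T} \<Longrightarrow> \<bar>wcomp U r - wcomp V r\<bar> \<le> C * K * exp (lam * r)"
    and K: "\<And>r. r \<in> {0..T} \<Longrightarrow> \<bar>U r - V r\<bar> \<le> K * exp (lam * r)"
    and s: "s \<in> {0..T}" and \<theta>: "\<theta> \<in> {-h..0}"
  shows "\<bar>wcomp U (s+\<theta>) - wcomp V (s+\<theta>)\<bar> + \<bar>U (s+\<theta>) - V (s+\<theta>)\<bar> \<le> (C + 1) * K * exp (lam * s)"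
proof (cases "s + \<theta> \<le> 0")
  case True
  then show ?thesis using admissibleD(1)[OF U] admissibleD(1)[OF V] C K0 by (simp add: wcomp_def)
next
  case False
  then have r: "s + \<theta> \<in> {0..T}" using \<theta> s by auto
  have "exp (lam * (s + \<theta>)) \<le> exp (lam * s)" using \<theta> lam by (auto intro: mult_left_mono)
  then have "(C + 1) * K * exp (lam * (s+\<theta>)) \<le> (C + 1) * K * exp (lam * s)"
    using C K0 by (intro mult_left_mono) auto
  then show ?thesis using W[OF r] K[OF r] by (simp add: algebra_simps)
qed

text \<open>The key estimate for the contraction: in the weighted norm \<open>sup |U r| exp (- lam r)\<close>
  the map \<open>V \<mapsto> jtraj V\<close> is Lipschitz on \<open>[0,T]\<close> with a constant \<open>C\<close> independent of \<open>lam \<ge> 1\<close>.\<close>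

lemma jtraj_weighted_lipschitz:
  assumes T: "T \<ge> 0" and MV: "MV \<ge> 0" and MD: "MD \<ge> 0"
  obtains C where "C \<ge> 0" "\<And>lam U U' V V' K s. lam \<ge> 1 \<Longrightarrow> admissible U U' \<Longrightarrow> admissible V V' \<Longrightarrow>
      (\<And>r. r \<in> {-h..T} \<Longrightarrow> \<bar>U r\<bar> \<le> MV \<and> \<bar>U' r\<bar> \<le> MD) \<Longrightarrow>
      (\<And>r. r \<in> {-h..T} \<Longrightarrow> \<bar>V r\<bar> \<le> MV \<and> \<bar>V' r\<bar> \<le> MD) \<Longrightarrow>
      (\<And>r. r \<in> {0..T} \<Longrightarrow> \<bar>U r - V r\<bar> \<le> K * exp (lam * r)) \<Longrightarrow> s \<in> {0..T} \<Longrightarrow>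
      \<bar>jtraj U s - jtraj V s\<bar> \<le> C * K * exp (lam * s)"
proof -
  obtain Q where Q0: "Q \<ge> 0" and Q: "\<And>x. x > Rm \<Longrightarrow> \<bar>q x\<bar> \<le> Q" by (fact q_bounded)
  obtain MW where MW0: "MW \<ge> 0"
    and MW: "\<And>V V' r. admissible V V' \<Longrightarrow> r \<in> {-h..T} \<Longrightarrow> \<bar>wcomp V r\<bar> \<le> MW \<and> \<bar>wcomp' V r\<bar> \<le> MW"
    by (fact wcomp_apriori_bound)
  define M where "M = MW + MV + MD"
  have M: "MW \<le> M" "MV \<le> M" "MD \<le> M" using MW0 MV MD unfolding M_def by linarith+
  obtain L where L0: "L \<ge> 0" and L: "\<And>U U' V V' s s' E. admissible U U' \<Longrightarrow> admissible V V' \<Longrightarrow>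
      (\<And>r. r \<in> {-h..T} \<Longrightarrow> \<bar>wcomp U r\<bar> \<le> M \<and> \<bar>wcomp' U r\<bar> \<le> M \<and> \<bar>U r\<bar> \<le> M \<and> \<bar>U' r\<bar> \<le> M) \<Longrightarrow>
      (\<And>r. r \<in> {-h..T} \<Longrightarrow> \<bar>wcomp V r\<bar> \<le> M \<and> \<bar>wcomp' V r\<bar> \<le> M \<and> \<bar>V r\<bar> \<le> M \<and> \<bar>V' r\<bar> \<le> M) \<Longrightarrow>
      s \<in> {0..T} \<Longrightarrow> s' \<in> {0..T} \<Longrightarrow>
      (\<And>\<theta>. \<theta> \<in> {-h..0} \<Longrightarrow> \<bar>wcomp U (s+\<theta>) - wcomp V (s'+\<theta>)\<bar> + \<bar>U (s+\<theta>) - V (s'+\<theta>)\<bar> \<le> E) \<Longrightarrow>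
      \<bar>jtraj U s - jtraj V s'\<bar> \<le> L * E"
    by (fact jtraj_lipschitz_on)
  obtain Lq where Lq0: "Lq \<ge> 0" and Lq: "\<And>x y. x \<in> {0..MV} \<Longrightarrow> y \<in> {0..MV} \<Longrightarrow> \<bar>q x - q y\<bar> \<le> Lq * \<bar>x - y\<bar>"
    by (fact q_lipschitz_on)
  define C1 where "C1 = a 0 * exp (Q * T) * Lq"
  have C10: "C1 \<ge> 0" unfolding C1_def using a_nonneg[of 0] Lq0 by simp
  show ?thesis
  proof (rule that[of "L * (C1 + 1)"])
    show "L * (C1 + 1) \<ge> 0" using L0 C10 by simp
    fix lam U U' V V' K s assume lam: "lam \<ge> 1" and U: "admissible U U'" and V: "admissible V V'"
      and BU: "\<And>r. r \<in> {-h..T} \<Longrightarrow> \<bar>U r\<bar> \<le> MV \<and> \<bar>U' r\<bar> \<le> MD"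
      and BV: "\<And>r. r \<in> {-h..T} \<Longrightarrow> \<bar>V r\<bar> \<le> MV \<and> \<bar>V' r\<bar> \<le> MD"
      and K: "\<And>r. r \<in> {0..T} \<Longrightarrow> \<bar>U r - V r\<bar> \<le> K * exp (lam * r)" and s: "s \<in> {0..T}"
    have K0: "K \<ge> 0" using K[of 0] T by (simp add: order_trans[OF abs_ge_zero])
    have UB: "U r \<le> MV" and VB: "V r \<le> MV" if "r \<in> {0..T}" for r
    proof -
      have "r \<in> {-h..T}" using that h_pos by auto
      then show "U r \<le> MV" "V r \<le> MV" using BU BV by (auto simp: abs_le_iff)
    qed
    have WD: "\<bar>wcomp U r - wcomp V r\<bar> \<le> C1 * K * exp (lam * r)" if "r \<in> {0..T}" for r
      unfolding C1_def by (rule wcomp_diff_le[OF U V Q0 Q Lq0 Lq UB VB lam K0 K that])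
    have MU: "\<bar>wcomp U r\<bar> \<le> M \<and> \<bar>wcomp' U r\<bar> \<le> M \<and> \<bar>U r\<bar> \<le> M \<and> \<bar>U' r\<bar> \<le> M"
      and MV: "\<bar>wcomp V r\<bar> \<le> M \<and> \<bar>wcomp' V r\<bar> \<le> M \<and> \<bar>V r\<bar> \<le> M \<and> \<bar>V' r\<bar> \<le> M"
      if "r \<in> {-h..T}" for r
      using MW[OF U that] MW[OF V that] BU[OF that] BV[OF that] M by (intro conjI; meson order_trans)+
    have "\<bar>jtraj U s - jtraj V s\<bar> \<le> L * ((C1 + 1) * K * exp (lam * s))"
      using traj_diff_weighted_le[OF U V C10 K0 _ WD K s] lam by (intro L[OF U V MU MV s s]) auto
    then show "\<bar>jtraj U s - jtraj V s\<bar> \<le> L * (C1 + 1) * K * exp (lam * s)" by (simp add: mult.assoc)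
  qed
qed

lemma picard_diff_le:
  assumes U: "admissible U U'" and V: "admissible V V'" and C: "C \<ge> 0" and lam: "lam \<ge> 1" "2 * C \<le> lam"
    and K: "K \<ge> 0" and G: "\<And>s. s \<in> {0..T} \<Longrightarrow> \<bar>jtraj U s - jtraj V s\<bar> \<le> C * K * exp (lam * s)"
    and t: "t \<in> {0..T}"
  shows "\<bar>picard U t - picard V t\<bar> \<le> K / 2 * exp (lam * t)"
proof (cases "t = 0")
  case True
  then show ?thesis using K by (simp add: picard_def)
next
  case False
  then have t0: "t > 0" using t by simp
  have "\<bar>voc (jtraj U) t - voc (jtraj V) t\<bar> \<le> integral {0..t} (\<lambda>s. C * K * exp (lam * s))"
    using t0 t G C K lam
    by (intro voc_diff_le jtraj_continuous[OF U] jtraj_continuous[OF V] integral_exp_le(1)) auto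
  also have "\<dots> \<le> C * K * exp (lam * t) / lam"
    using t0 C K lam by (intro integral_exp_le(2)) auto
  also have "\<dots> = (C / lam) * (K * exp (lam * t))" by simp
  also have "\<dots> \<le> (1 / 2) * (K * exp (lam * t))"
    using lam K by (intro mult_right_mono) (auto simp: divide_le_eq)
  finally show ?thesis using t0 by (simp add: picard_def)
qed

end

section \<open>Existence by Picard iteration\<close>

text \<open>Fixing a time horizon \<open>T\<close>, constants \<open>MV, MD\<close> from the a priori bounds and \<open>C, lam\<close> from the
  weighted Lipschitz estimate, the Picard map contracts by \<open>1/2\<close> in the weighted norm.\<close>

locale picard_window = cell_fde_init +
  fixes T MV MD C lam :: real
  assumes T_nonneg: "T \<ge> 0" and MV_nonneg: "MV \<ge> 0" and C_nonneg: "C \<ge> 0"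
    and lam_ge_1: "lam \<ge> 1" and lam_ge_C: "2 * C \<le> lam"
    and picard_bounded_on: "\<And>V V' r. admissible V V' \<Longrightarrow> r \<in> {-h..T} \<Longrightarrow> \<bar>picard V r\<bar> \<le> MV \<and> \<bar>picard' V r\<bar> \<le> MD"
    and jtraj_lipschitz: "\<And>U U' V V' K s. admissible U U' \<Longrightarrow> admissible V V' \<Longrightarrow>
      (\<And>r. r \<in> {-h..T} \<Longrightarrow> \<bar>U r\<bar> \<le> MV \<and> \<bar>U' r\<bar> \<le> MD) \<Longrightarrow>
      (\<And>r. r \<in> {-h..T} \<Longrightarrow> \<bar>V r\<bar> \<le> MV \<and> \<bar>V' r\<bar> \<le> MD) \<Longrightarrow>
      (\<And>r. r \<in> {0..T} \<Longrightarrow> \<bar>U r - V r\<bar> \<le> K * exp (lam * r)) \<Longrightarrow> s \<in> {0..T} \<Longrightarrow>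
      \<bar>jtraj U s - jtraj V s\<bar> \<le> C * K * exp (lam * s)"

context cell_fde_init
begin

lemma picard_window_exists:
  assumes T: "T \<ge> 0"
  obtains MV MD C lam where "picard_window h Rm \<mu> q j a b T MV MD C lam"
proof -
  obtain MV MD where MV0: "MV \<ge> 0" and MD0: "MD \<ge> 0"
    and B: "\<And>V V' r. admissible V V' \<Longrightarrow> r \<in> {-h..T} \<Longrightarrow> \<bar>picard V r\<bar> \<le> MV \<and> \<bar>picard' V r\<bar> \<le> MD"
    by (fact picard_apriori_bound[OF T])
  obtain C where C0: "C \<ge> 0" and L: "\<And>lam U U' V V' K s. lam \<ge> 1 \<Longrightarrow> admissible U U' \<Longrightarrow> admissible V V' \<Longrightarrow>
      (\<And>r. r \<in> {-h..T} \<Longrightarrow> \<bar>U r\<bar> \<le> MV \<and> \<bar>U' r\<bar> \<le> MD) \<Longrightarrow>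
      (\<And>r. r \<in> {-h..T} \<Longrightarrow> \<bar>V r\<bar> \<le> MV \<and> \<bar>V' r\<bar> \<le> MD) \<Longrightarrow>
      (\<And>r. r \<in> {0..T} \<Longrightarrow> \<bar>U r - V r\<bar> \<le> K * exp (lam * r)) \<Longrightarrow> s \<in> {0..T} \<Longrightarrow>
      \<bar>jtraj U s - jtraj V s\<bar> \<le> C * K * exp (lam * s)"
    by (fact jtraj_weighted_lipschitz[OF T MV0 MD0])
  have "picard_window h Rm \<mu> q j a b T MV MD C (max 1 (2 * C))"
    by (unfold_locales; (intro T MV0 C0 B L)?) auto
  then show ?thesis by (rule that)
qed

text \<open>Any admissible function starts the iteration; this one has the right derivative
  \<open>j(a,b) - \<mu> b(0) = b'(0)\<close> at \<open>0\<close>.\<close>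

definition vinit :: "real \<Rightarrow> real" where
  "vinit t = (if t \<le> 0 then b t else b 0 * exp (- \<mu> * t) + j (a, b) * (1 - exp (- t)))"

definition vinit' :: "real \<Rightarrow> real" where
  "vinit' t = (if t \<le> 0 then dr h b t else b 0 * (exp (- \<mu> * t) * (- \<mu>)) + j (a, b) * exp (- t))"

lemma vinit_admissible: "admissible vinit vinit'"
proof -
  let ?g = "\<lambda>t. b 0 * exp (- \<mu> * t) + j (a, b) * (1 - exp (- t))"
  let ?g' = "\<lambda>t. b 0 * (exp (- \<mu> * t) * (- \<mu>)) + j (a, b) * exp (- t)"
  have "(?g has_real_derivative ?g' t) (at t within {0..})" for t
    by (auto intro!: derivative_eq_intros)
  moreover have "continuous_on {0..} ?g'" by (intro continuous_intros)
  moreover have "dr h b 0 = ?g' 0" using b_compat by simp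
  ultimately have "\<And>t. t \<ge> -h \<Longrightarrow> (vinit has_real_derivative vinit' t) (at t within {-h..})"
    and "continuous_on {-h..} vinit'"
    using piecewise_has_real_derivative[OF _ C1fun_dr(2)[OF h_pos b_C1] C1fun_dr(1)[OF h_pos b_C1], of ?g ?g'] h_pos
    unfolding vinit_def[abs_def] vinit'_def[abs_def] by simp_all
  moreover have "vinit t \<ge> 0" if "t \<ge> 0" for t
    using j_nonneg[OF init_Uplus] b_nonneg[of 0] b_nonneg[of t] that by (simp add: vinit_def)
  ultimately show ?thesis unfolding admissible_def by (simp add: vinit_def)
qed

definition viter :: "nat \<Rightarrow> real \<Rightarrow> real" where
  "viter n = (picard ^^ Suc n) vinit"

definition viter' :: "nat \<Rightarrow> real \<Rightarrow> real" where
  "viter' n = picard' ((picard ^^ n) vinit)"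

lemma picard_iterate_admissible: "\<exists>D. admissible ((picard ^^ n) vinit) D"
  by (induction n) (use vinit_admissible picard_admissible in auto)

lemma viter_admissible: "admissible (viter n) (viter' n)"
  using picard_iterate_admissible[of n] picard_admissible by (auto simp: viter_def viter'_def)

lemma viter_Suc: "viter (Suc n) = picard (viter n)"
  by (simp add: viter_def)

lemma viter'_Suc: "viter' (Suc n) = picard' (viter n)"
  by (simp add: viter_def viter'_def)

definition jlim :: "real \<Rightarrow> real" where
  "jlim s = lim (\<lambda>n. jtraj (viter n) s)"

end

context picard_window
begin

lemma picard_contraction:
  assumes U: "admissible U U'" and V: "admissible V V'"
    and BU: "\<And>r. r \<in> {-h..T} \<Longrightarrow> \<bar>U r\<bar> \<le> MV \<and> \<bar>U' r\<bar> \<le> MD"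
    and BV: "\<And>r. r \<in> {-h..T} \<Longrightarrow> \<bar>V r\<bar> \<le> MV \<and> \<bar>V' r\<bar> \<le> MD"
    and K: "\<And>r. r \<in> {0..T} \<Longrightarrow> \<bar>U r - V r\<bar> \<le> K * exp (lam * r)" and t: "t \<in> {0..T}"
  shows "\<bar>picard U t - picard V t\<bar> \<le> K / 2 * exp (lam * t)"
proof (rule picard_diff_le[OF U V C_nonneg lam_ge_1 lam_ge_C _ _ t])
  show "K \<ge> 0" using K[of 0] T_nonneg by (simp add: order_trans[OF abs_ge_zero])
  show "\<And>s. s \<in> {0..T} \<Longrightarrow> \<bar>jtraj U s - jtraj V s\<bar> \<le> C * K * exp (lam * s)"
    by (rule jtraj_lipschitz[OF U V BU BV K])
qed

lemma viter_bounded: "r \<in> {-h..T} \<Longrightarrow> \<bar>viter n r\<bar> \<le> MV \<and> \<bar>viter' n r\<bar> \<le> MD"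
  using picard_iterate_admissible[of n] picard_bounded_on by (auto simp: viter_def viter'_def)

lemma viter_step: "r \<in> {0..T} \<Longrightarrow> \<bar>viter (Suc n) r - viter n r\<bar> \<le> 2 * MV / 2^n * exp (lam * r)"
proof (induction n arbitrary: r)
  case 0
  have "r \<in> {-h..T}" using 0 h_pos by auto
  then have "\<bar>viter (Suc 0) r\<bar> \<le> MV" "\<bar>viter 0 r\<bar> \<le> MV" using viter_bounded by blast+
  then have "\<bar>viter (Suc 0) r - viter 0 r\<bar> \<le> 2 * MV" by linarith
  also have "\<dots> \<le> 2 * MV * exp (lam * r)"
    using 0 lam_ge_1 MV_nonneg mult_left_mono[of 1 "exp (lam * r)" "2 * MV"] by simp
  finally show ?case by simp
next
  case (Suc n)
  have "\<bar>picard (viter (Suc n)) r - picard (viter n) r\<bar> \<le> 2 * MV / 2^n / 2 * exp (lam * r)"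
    by (rule picard_contraction[OF viter_admissible viter_admissible viter_bounded viter_bounded Suc.IH Suc.prems])
  then show ?case by (simp add: viter_Suc)
qed

lemma jlim_approx:
  assumes s: "s \<in> {0..T}"
  shows "\<bar>jlim s - jtraj (viter n) s\<bar> \<le> 4 * C * MV * exp (lam * T) / 2^n"
proof -
  have "\<bar>jtraj (viter (Suc m)) s - jtraj (viter m) s\<bar> \<le> C * (2 * MV) * exp (lam * s) / 2^m" for m
    using jtraj_lipschitz[OF viter_admissible viter_admissible viter_bounded viter_bounded viter_step s]
    by simp
  from geometric_Cauchy_limit(2)[OF this, of n]
  have "\<bar>jlim s - jtraj (viter n) s\<bar> \<le> 4 * C * MV * exp (lam * s) / 2^n" by (simp add: jlim_def)
  also have "\<dots> \<le> 4 * C * MV * exp (lam * T) / 2^n"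
    using s lam_ge_1 C_nonneg MV_nonneg by (intro divide_right_mono mult_left_mono) auto
  finally show ?thesis .
qed

end

context cell_fde_init
begin

lemma jlim_continuous: "continuous_on {0..} jlim"
proof (rule continuous_on_atLeastI)
  fix T :: real assume "T > 0"
  then obtain MV MD C lam where "picard_window h Rm \<mu> q j a b T MV MD C lam"
    using picard_window_exists by (meson less_imp_le)
  then interpret picard_window h Rm \<mu> q j a b T MV MD C lam .
  have ul: "uniform_limit {0..T} (\<lambda>n. jtraj (viter n)) jlim sequentially"
  proof (rule uniform_limitI)
    fix e :: real assume "e > 0"
    then obtain N where N: "\<And>n. n \<ge> N \<Longrightarrow> 4 * C * MV * exp (lam * T) / 2^n < e"
      using eventually_div_pow2_less by blast
    have "dist (jtraj (viter n) s) (jlim s) < e" if "n \<ge> N" "s \<in> {0..T}" for n s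
      using jlim_approx[OF that(2), of n] N[OF that(1)] by (simp add: dist_real_def abs_minus_commute)
    then show "\<forall>\<^sub>F n in sequentially. \<forall>s\<in>{0..T}. dist (jtraj (viter n) s) (jlim s) < e"
      unfolding eventually_sequentially by blast
  qed
  have "continuous_on {0..T} (jtraj (viter n))" for n
    by (rule continuous_on_subset[OF jtraj_continuous[OF viter_admissible]]) simp
  then have "\<forall>\<^sub>F n in sequentially. continuous_on {0..T} (jtraj (viter n))"
    by (simp add: always_eventually)
  from uniform_limit_theorem[OF this ul] show "continuous_on {0..T} jlim" by simp
qed

lemma jlim_0: "jlim 0 = j (a, b)"
  unfolding jlim_def using jtraj_0[OF viter_admissible] by simp

lemma jlim_nonneg:
  assumes s: "s \<ge> 0"
  shows "jlim s \<ge> 0"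
proof -
  obtain MV MD C lam where "picard_window h Rm \<mu> q j a b s MV MD C lam"
    using picard_window_exists[OF s] by blast
  then interpret picard_window h Rm \<mu> q j a b s MV MD C lam .
  have "s \<in> {0..s}" using s by simp
  then have "- jlim s \<le> 0 + 4 * C * MV * exp (lam * s) / 2^n" for n
    using jlim_approx[of s n] jtraj_nonneg[OF viter_admissible s, of n] by linarith
  then have "- jlim s \<le> 0" by (rule le_if_le_add_div_pow2)
  then show ?thesis by simp
qed

text \<open>The solution's \<open>v\<close>-component: on \<open>[0,\<infinity>)\<close> it is defined through the limit of
  \<open>jtraj (viter n)\<close>, which makes its differentiability immediate.\<close>

definition vsol :: "real \<Rightarrow> real" where
  "vsol t = (if t \<le> 0 then b t else voc jlim t)"

definition vsol' :: "real \<Rightarrow> real" where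
  "vsol' t = (if t \<le> 0 then dr h b t else jlim t - \<mu> * voc jlim t)"

lemma vsol_admissible: "admissible vsol vsol'"
proof -
  have "continuous_on {0..} (\<lambda>t. jlim t - \<mu> * voc jlim t)"
    by (intro continuous_intros jlim_continuous voc_continuous)
  note glued = piecewise_has_real_derivative[OF _ C1fun_dr(2)[OF h_pos b_C1] C1fun_dr(1)[OF h_pos b_C1]
      voc_has_derivative[OF jlim_continuous] this]
  have "dr h b 0 = jlim 0 - \<mu> * voc jlim 0" using b_compat jlim_0 by (simp add: voc_0)
  with glued h_pos have "\<And>t. t \<ge> -h \<Longrightarrow> (vsol has_real_derivative vsol' t) (at t within {-h..})"
    and "continuous_on {-h..} vsol'"
    unfolding vsol_def[abs_def] vsol'_def[abs_def] by (simp_all add: voc_0)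
  moreover have "vsol t \<ge> 0" if "t \<ge> 0" for t
    using voc_nonneg[OF jlim_continuous jlim_nonneg] b_nonneg that by (simp add: vsol_def)
  ultimately show ?thesis unfolding admissible_def by (simp add: vsol_def)
qed

end

context picard_window
begin

lemma vsol_approx:
  assumes r: "r \<in> {0..T}"
  shows "\<bar>vsol r - viter (Suc n) r\<bar> \<le> T * (4 * C * MV * exp (lam * T)) / 2^n"
proof (cases "r = 0")
  case True
  have "viter (Suc n) 0 = b 0" using admissibleD(1)[OF viter_admissible] by simp
  then show ?thesis using True T_nonneg C_nonneg MV_nonneg by (simp add: vsol_def)
next
  case False
  then have r0: "r > 0" using r by simp
  have "\<bar>voc jlim r - voc (jtraj (viter n)) r\<bar> \<le> integral {0..r} (\<lambda>_. 4 * C * MV * exp (lam * T) / 2^n)"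
    using r jlim_approx by (intro voc_diff_le jlim_continuous jtraj_continuous[OF viter_admissible]) auto
  also have "\<dots> = r * (4 * C * MV * exp (lam * T) / 2^n)" using r by simp
  also have "\<dots> \<le> T * (4 * C * MV * exp (lam * T) / 2^n)"
    using r C_nonneg MV_nonneg by (intro mult_right_mono) auto
  finally show ?thesis using r0 by (simp add: vsol_def viter_Suc picard_def)
qed

lemma vsol_bounded:
  assumes r: "r \<in> {-h..T}"
  shows "\<bar>vsol r\<bar> \<le> MV \<and> \<bar>vsol' r\<bar> \<le> MD"
proof (cases "r \<le> 0")
  case True
  have "vsol r = viter 0 r" "vsol' r = viter' 0 r"
    using True admissibleD(1)[OF viter_admissible] by (simp_all add: vsol_def vsol'_def viter'_def picard'_def)
  then show ?thesis using viter_bounded[OF r] by simp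
next
  case False
  then have r0: "r \<in> {0..T}" "r > 0" using r by auto
  define E where "E = 4 * C * MV * exp (lam * T)"
  have "\<bar>vsol r\<bar> \<le> MV + T * E / 2^n" for n
    using viter_bounded[OF r, of "Suc n"] vsol_approx[OF r0(1), of n] unfolding E_def by linarith
  then have v: "\<bar>vsol r\<bar> \<le> MV" by (rule le_if_le_add_div_pow2)
  have tri: "\<bar>x + y - \<mu> * z\<bar> \<le> \<bar>x\<bar> + \<bar>y\<bar> + \<mu> * \<bar>z\<bar>" for x y z
  proof -
    have "\<bar>\<mu> * z\<bar> = \<mu> * \<bar>z\<bar>" using mu_nonneg by (simp add: abs_mult)
    then show ?thesis by linarith
  qed
  have "\<bar>vsol' r\<bar> \<le> MD + (E + \<mu> * T * E) / 2^n" for n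
  proof -
    have "vsol' r = viter' (Suc n) r + (jlim r - jtraj (viter n) r) - \<mu> * (vsol r - viter (Suc n) r)"
      using r0 by (simp add: vsol'_def vsol_def viter'_Suc viter_Suc picard_def picard'_def algebra_simps)
    then have "\<bar>vsol' r\<bar> \<le> \<bar>viter' (Suc n) r\<bar> + \<bar>jlim r - jtraj (viter n) r\<bar> + \<mu> * \<bar>vsol r - viter (Suc n) r\<bar>"
      using tri by presburger
    moreover have "\<mu> * \<bar>vsol r - viter (Suc n) r\<bar> \<le> \<mu> * (T * E / 2^n)"
      using vsol_approx[OF r0(1), of n, folded E_def] mu_nonneg by (intro mult_left_mono) auto
    moreover have "(E + \<mu> * T * E) / 2^n = E / 2^n + \<mu> * (T * E / 2^n)" by (simp add: add_divide_distrib)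
    ultimately show ?thesis
      using viter_bounded[OF r, of "Suc n"] jlim_approx[OF r0(1), of n, folded E_def] by linarith
  qed
  then have "\<bar>vsol' r\<bar> \<le> MD" by (rule le_if_le_add_div_pow2)
  with v show ?thesis ..
qed

lemma jtraj_vsol_on:
  assumes s: "s \<in> {0..T}"
  shows "jtraj vsol s = jlim s"
proof -
  define E where "E = 4 * C * MV * exp (lam * T)"
  have E0: "E \<ge> 0" using C_nonneg MV_nonneg by (simp add: E_def)
  have "\<bar>jtraj vsol s - jlim s\<bar> \<le> (C * (T * E) * exp (lam * T) + E) / 2^n" for n
  proof -
    have K: "\<bar>vsol r - viter (Suc n) r\<bar> \<le> T * E / 2^n * exp (lam * r)" if "r \<in> {0..T}" for r
    proof -
      have "T * E / 2^n \<le> T * E / 2^n * exp (lam * r)"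
        using that lam_ge_1 T_nonneg E0 mult_left_mono[of 1 "exp (lam * r)" "T * E / 2^n"] by simp
      then show ?thesis using vsol_approx[OF that, of n] unfolding E_def by linarith
    qed
    have "\<bar>jtraj vsol s - jtraj (viter (Suc n)) s\<bar> \<le> C * (T * E / 2^n) * exp (lam * s)"
      by (rule jtraj_lipschitz[OF vsol_admissible viter_admissible vsol_bounded viter_bounded K s])
    also have "\<dots> \<le> C * (T * E / 2^n) * exp (lam * T)"
      using s lam_ge_1 C_nonneg T_nonneg E0 by (intro mult_left_mono) auto
    finally have "\<bar>jtraj vsol s - jtraj (viter (Suc n)) s\<bar> \<le> C * (T * E) * exp (lam * T) / 2^n"
      by simp
    moreover have "\<bar>jlim s - jtraj (viter (Suc n)) s\<bar> \<le> E / 2^n"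
    proof -
      have "E / 2^Suc n \<le> E / 2^n" using E0 by (intro divide_left_mono) auto
      then show ?thesis using jlim_approx[OF s, of "Suc n", folded E_def] by linarith
    qed
    ultimately show ?thesis by (simp add: add_divide_distrib)
  qed
  then have "jtraj vsol s - jlim s = 0" by (rule eq_0_if_le_div_pow2)
  then show ?thesis by simp
qed

lemma fixed_points_agree:
  assumes U: "admissible U U'" "picard U = U" and V: "admissible V V'" "picard V = V" and t: "t \<in> {0..T}"
  shows "U t = V t"
proof -
  have U': "admissible U (picard' U)" and V': "admissible V (picard' V)"
    using picard_admissible[OF U(1)] picard_admissible[OF V(1)] U(2) V(2) by simp_all
  have BU: "\<bar>U r\<bar> \<le> MV \<and> \<bar>picard' U r\<bar> \<le> MD" and BV: "\<bar>V r\<bar> \<le> MV \<and> \<bar>picard' V r\<bar> \<le> MD"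
    if "r \<in> {-h..T}" for r
    using picard_bounded_on[OF U(1) that] picard_bounded_on[OF V(1) that] U(2) V(2) by simp_all
  have "\<bar>U r - V r\<bar> \<le> 2 * MV / 2^n * exp (lam * r)" if "r \<in> {0..T}" for r n
    using that
  proof (induction n arbitrary: r)
    case 0
    have "r \<in> {-h..T}" using 0 h_pos by auto
    then have "\<bar>U r - V r\<bar> \<le> 2 * MV" using BU BV by fastforce
    also have "\<dots> \<le> 2 * MV * exp (lam * r)"
      using 0 lam_ge_1 MV_nonneg mult_left_mono[of 1 "exp (lam * r)" "2 * MV"] by simp
    finally show ?case by simp
  next
    case (Suc n)
    from picard_contraction[OF U' V' BU BV Suc.IH Suc.prems] show ?case using U(2) V(2) by simp
  qed
  then have "\<bar>U t - V t\<bar> \<le> 2 * MV * exp (lam * t) / 2^n" for n using t by simp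
  then have "U t - V t = 0" by (rule eq_0_if_le_div_pow2)
  then show ?thesis by simp
qed

end

context cell_fde_init
begin

lemma jtraj_vsol: "s \<ge> 0 \<Longrightarrow> jtraj vsol s = jlim s"
proof -
  assume s: "s \<ge> 0"
  then obtain MV MD C lam where "picard_window h Rm \<mu> q j a b s MV MD C lam"
    using picard_window_exists by blast
  then interpret picard_window h Rm \<mu> q j a b s MV MD C lam .
  show ?thesis using jtraj_vsol_on s by simp
qed

lemma picard_vsol: "picard vsol = vsol"
proof
  fix t
  have "integral {0..t} (\<lambda>s. exp (\<mu> * s) * jtraj vsol s) = integral {0..t} (\<lambda>s. exp (\<mu> * s) * jlim s)"
    by (rule integral_cong) (simp add: jtraj_vsol)
  then show "picard vsol t = vsol t" by (simp add: picard_def vsol_def voc_def)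
qed

lemma admissible_fixed_point_eq_vsol:
  assumes W: "admissible W W'" "picard W = W"
  shows "W = vsol"
proof
  fix t
  show "W t = vsol t"
  proof (cases "t \<le> 0")
    case True
    then show ?thesis using admissibleD(1)[OF W(1)] by (simp add: vsol_def)
  next
    case False
    then obtain MV MD C lam where "picard_window h Rm \<mu> q j a b t MV MD C lam"
      using picard_window_exists[of t] by force
    then interpret picard_window h Rm \<mu> q j a b t MV MD C lam .
    show ?thesis using fixed_points_agree[OF W vsol_admissible picard_vsol] False by simp
  qed
qed

section \<open>The solution and the semiflow\<close>

lemma traj_vsol_is_sol: "is_sol h Rm q j \<mu> (a, b) (traj vsol)"
proof -
  note V = vsol_admissible
  have "\<forall>t\<ge>-h. (fst (traj vsol) has_real_derivative wcomp' vsol t) (at t within {-h..}) \<and>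
      (snd (traj vsol) has_real_derivative vsol' t) (at t within {-h..})"
    using wcomp_has_derivative(1)[OF V] admissibleD(3)[OF V] by (simp add: traj_def)
  moreover have "\<forall>t>0. wcomp' vsol t = q (snd (traj vsol) t) * fst (traj vsol) t \<and>
      vsol' t = j (seg h (traj vsol) t) - \<mu> * snd (traj vsol) t"
    using jtraj_vsol by (simp add: wcomp'_def wcomp_def vsol'_def vsol_def traj_def jtraj_def)
  moreover have "\<forall>t\<ge>0. seg h (traj vsol) t \<in> Uset h Rm"
    using seg_traj_Uplus[OF V] Uplus_subset_Uset by blast
  ultimately show ?thesis
    unfolding is_sol_def using wcomp_has_derivative(2)[OF V] admissibleD(2)[OF V] seg_traj_0[OF V] by blast
qed

lemma seg_traj_vsol_Xplus:
  assumes t: "t \<ge> 0"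
  shows "seg h (traj vsol) t \<in> Xplus h Rm q j \<mu>"
proof (cases "t = 0")
  case True
  then show ?thesis using seg_traj_0[OF vsol_admissible] init_Xplus by simp
next
  case False
  then have t0: "t > 0" using t by simp
  have U: "seg h (traj vsol) t \<in> Uplus h" by (rule seg_traj_Uplus[OF vsol_admissible t])
  have "dr h (fst (seg h (traj vsol) t)) 0 = wcomp' vsol t" "dr h (snd (seg h (traj vsol) t)) 0 = vsol' t"
    using dr_fst_seg_traj[OF vsol_admissible t, of 0] dr_snd_seg_traj[OF vsol_admissible t, of 0] h_pos by simp_all
  then have "(dr h (fst (seg h (traj vsol) t)) 0, dr h (snd (seg h (traj vsol) t)) 0) = Fmap q j \<mu> (seg h (traj vsol) t)"
    using t0 jtraj_vsol[of t] by (simp add: Fmap_def seg_traj_0_apply wcomp'_def wcomp_def vsol'_def vsol_def jtraj_def)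
  then show ?thesis using U Uplus_subset_Uset by (auto simp: Xplus_def Xset_def)
qed

lemma is_solE:
  assumes "is_sol h Rm q j \<mu> (a, b) y"
  obtains w' v' where "\<And>t. t \<ge> -h \<Longrightarrow> (fst y has_real_derivative w' t) (at t within {-h..})"
    "continuous_on {-h..} v'"
    "\<And>t. t \<ge> -h \<Longrightarrow> (snd y has_real_derivative v' t) (at t within {-h..})"
    "\<And>t. t > 0 \<Longrightarrow> w' t = q (snd y t) * fst y t"
    "\<And>t. t > 0 \<Longrightarrow> v' t = j (seg h y t) - \<mu> * snd y t"
    "\<And>\<theta>. \<theta> \<in> {-h..0} \<Longrightarrow> fst y \<theta> = a \<theta> \<and> snd y \<theta> = b \<theta>"
proof -
  from assms obtain w' v' where "continuous_on {-h..} v'"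
    "\<forall>t\<ge>-h. (fst y has_real_derivative w' t) (at t within {-h..}) \<and>
       (snd y has_real_derivative v' t) (at t within {-h..})"
    "\<forall>t>0. w' t = q (snd y t) * fst y t \<and> v' t = j (seg h y t) - \<mu> * snd y t"
    and y0: "seg h y 0 = (a, b)"
    unfolding is_sol_def by blast
  moreover have "fst y \<theta> = a \<theta> \<and> snd y \<theta> = b \<theta>" if "\<theta> \<in> {-h..0}" for \<theta>
  proof -
    have "fst (seg h y 0) \<theta> = a \<theta>" "snd (seg h y 0) \<theta> = b \<theta>" using y0 by simp_all
    then show ?thesis using that by (simp add: seg_def)
  qed
  ultimately show ?thesis using that by blast
qed

definition vpart :: "state \<Rightarrow> real \<Rightarrow> real" where
  "vpart y t = (if t \<le> 0 then b t else snd y t)"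

context
  fixes y :: state and w' v' :: "real \<Rightarrow> real"
  assumes fst_y_has_derivative: "\<And>t. t \<ge> -h \<Longrightarrow> (fst y has_real_derivative w' t) (at t within {-h..})"
    and v'_continuous: "continuous_on {-h..} v'"
    and snd_y_has_derivative: "\<And>t. t \<ge> -h \<Longrightarrow> (snd y has_real_derivative v' t) (at t within {-h..})"
    and w'_eq: "\<And>t. t > 0 \<Longrightarrow> w' t = q (snd y t) * fst y t"
    and v'_eq: "\<And>t. t > 0 \<Longrightarrow> v' t = j (seg h y t) - \<mu> * snd y t"
    and y_init: "\<And>\<theta>. \<theta> \<in> {-h..0} \<Longrightarrow> fst y \<theta> = a \<theta> \<and> snd y \<theta> = b \<theta>"
    and y_Xplus: "\<And>s. s \<ge> 0 \<Longrightarrow> seg h y s \<in> Xplus h Rm q j \<mu>"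
begin

lemma solution_nonneg:
  assumes r: "r \<ge> -h"
  shows "fst y r \<ge> 0 \<and> snd y r \<ge> 0"
proof -
  define s where "s = max r 0"
  have s: "s \<ge> 0" "r - s \<in> {-h..0}" using r h_pos by (auto simp: s_def)
  then have "seg h y s \<in> Uplus h" using y_Xplus by (simp add: Xplus_def)
  then have "fst (seg h y s) (r - s) \<ge> 0 \<and> snd (seg h y s) (r - s) \<ge> 0"
    using s(2) unfolding Uplus_def by blast
  then show ?thesis using s(2) by (simp add: seg_def)
qed

lemma vpart_eq: "t \<ge> -h \<Longrightarrow> vpart y t = snd y t"
  using y_init[of t] by (auto simp: vpart_def)

lemma vpart_admissible: "admissible (vpart y) v'"
proof -
  have "(vpart y has_real_derivative v' t) (at t within {-h..})" if t: "t \<ge> -h" for t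
    using has_field_derivative_transform_within[OF snd_y_has_derivative[OF t] zero_less_one] t vpart_eq
    by auto
  moreover have "vpart y t \<ge> 0" if "t \<ge> 0" for t
    using solution_nonneg[of t] that h_pos b_nonneg[of 0] by (simp add: vpart_def)
  ultimately show ?thesis using v'_continuous by (auto simp: admissible_def vpart_def)
qed

lemma solution_at_0: "fst y 0 = a 0" "snd y 0 = b 0"
  using y_init[of 0] h_pos by simp_all

text \<open>The \<open>w\<close>-equation is linear: \<open>w(t) exp (- \<integral>\<^sub>0\<^sup>t q(v))\<close> has derivative zero.\<close>

lemma solution_fst_eq_wcomp:
  assumes t: "t \<ge> -h"
  shows "fst y t = wcomp (vpart y) t"
proof (cases "t \<le> 0")
  case True
  then show ?thesis using y_init[of t] t by (simp add: wcomp_def)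
next
  case False
  define I where "I s = integral {0..s} (\<lambda>\<sigma>. q (vpart y \<sigma>))" for s
  let ?F = "\<lambda>s. fst y s * exp (- I s)"
  let ?F' = "\<lambda>s. w' s * exp (- I s) + fst y s * (exp (- I s) * (- q (vpart y s)))"
  have "?F t = ?F 0"
  proof (rule eq_if_has_real_derivative_0[of t _ ?F'])
    fix x assume x: "x \<in> {0..t}"
    have "(fst y has_real_derivative w' x) (at x within {0..t})"
      by (rule has_field_derivative_subset[OF fst_y_has_derivative]) (use x h_pos in auto)
    moreover have "(I has_real_derivative q (vpart y x)) (at x within {0..t})"
      unfolding I_def using x
      by (intro has_field_derivative_subset[OF integral_has_real_derivative_atLeast]
          admissible_q_continuous[OF vpart_admissible]) auto
    ultimately show "(?F has_real_derivative ?F' x) (at x within {0..t})"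
      by (auto intro!: derivative_eq_intros)
  next
    fix x assume "x \<in> {0<..t}"
    then show "?F' x = 0" using w'_eq[of x] vpart_eq[of x] h_pos by (simp add: algebra_simps)
  qed (use False in simp)
  then have "fst y t = a 0 * exp (I t)" using solution_at_0 by (simp add: I_def exp_minus field_simps)
  then show ?thesis using False by (simp add: wcomp_def wexp_def I_def)
qed

lemma seg_solution_eq:
  assumes "t \<ge> 0"
  shows "seg h y t = seg h (traj (vpart y)) t"
proof -
  have "fst y (t + \<theta>) = wcomp (vpart y) (t + \<theta>) \<and> snd y (t + \<theta>) = vpart y (t + \<theta>)" if "\<theta> \<ge> -h" for \<theta>
    using solution_fst_eq_wcomp vpart_eq assms that by simp
  then show ?thesis by (simp add: seg_def traj_def fun_eq_iff)
qed

text \<open>Likewise \<open>exp (\<mu> t) v(t) - \<integral>\<^sub>0\<^sup>t exp (\<mu> s) j(x\<^sub>s) ds\<close> is constant, which is the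
  variation of constants formula for \<open>v\<close>.\<close>

lemma picard_vpart: "picard (vpart y) = vpart y"
proof
  fix t
  show "picard (vpart y) t = vpart y t"
  proof (cases "t \<le> 0")
    case True
    then show ?thesis by (simp add: picard_def vpart_def)
  next
    case False
    define J where "J s = integral {0..s} (\<lambda>\<sigma>. exp (\<mu> * \<sigma>) * jtraj (vpart y) \<sigma>)" for s
    let ?G = "\<lambda>s. exp (\<mu> * s) * snd y s - J s"
    let ?G' = "\<lambda>s. exp (\<mu> * s) * \<mu> * snd y s + exp (\<mu> * s) * v' s - exp (\<mu> * s) * jtraj (vpart y) s"
    have "?G t = ?G 0"
    proof (rule eq_if_has_real_derivative_0[of t _ ?G'])
      fix x assume x: "x \<in> {0..t}"
      have "(snd y has_real_derivative v' x) (at x within {0..t})"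
        by (rule has_field_derivative_subset[OF snd_y_has_derivative]) (use x h_pos in auto)
      moreover have "continuous_on {0..} (\<lambda>\<sigma>. exp (\<mu> * \<sigma>) * jtraj (vpart y) \<sigma>)"
        by (intro continuous_intros jtraj_continuous[OF vpart_admissible])
      then have "(J has_real_derivative exp (\<mu> * x) * jtraj (vpart y) x) (at x within {0..t})"
        unfolding J_def using x
        by (intro has_field_derivative_subset[OF integral_has_real_derivative_atLeast]) auto
      ultimately show "(?G has_real_derivative ?G' x) (at x within {0..t})"
        by (auto intro!: derivative_eq_intros simp: algebra_simps)
    next
      fix x assume "x \<in> {0<..t}"
      then have v'x: "v' x = jtraj (vpart y) x - \<mu> * snd y x"
        using v'_eq[of x] seg_solution_eq[of x] by (simp add: jtraj_def)
      show "?G' x = 0" unfolding v'x by (simp add: algebra_simps)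
    qed (use False in simp)
    then have "snd y t = exp (- \<mu> * t) * (b 0 + J t)" using solution_at_0 by (simp add: J_def exp_minus field_simps)
    then show ?thesis using False by (simp add: picard_def vpart_def voc_def J_def)
  qed
qed

lemma seg_solution_eq_vsol: "t \<ge> 0 \<Longrightarrow> seg h y t = seg h (traj vsol) t"
  using seg_solution_eq admissible_fixed_point_eq_vsol[OF vpart_admissible picard_vpart] by simp

end

lemma Splus_eq:
  assumes t: "t \<ge> 0"
  shows "Splus h Rm q j \<mu> t (a, b) = seg h (traj vsol) t"
  unfolding Splus_def
proof (rule the_equality)
  show "\<exists>x. is_sol h Rm q j \<mu> (a, b) x \<and> (\<forall>s\<ge>0. seg h x s \<in> Xplus h Rm q j \<mu>) \<and>
      seg h (traj vsol) t = seg h x t"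
    using traj_vsol_is_sol seg_traj_vsol_Xplus by blast
  fix z assume "\<exists>x. is_sol h Rm q j \<mu> (a, b) x \<and> (\<forall>s\<ge>0. seg h x s \<in> Xplus h Rm q j \<mu>) \<and> z = seg h x t"
  then obtain y where y: "is_sol h Rm q j \<mu> (a, b) y" "\<And>s. s \<ge> 0 \<Longrightarrow> seg h y s \<in> Xplus h Rm q j \<mu>"
    and z: "z = seg h y t" by blast
  obtain w' v' where "\<And>t. t \<ge> -h \<Longrightarrow> (fst y has_real_derivative w' t) (at t within {-h..})"
    "continuous_on {-h..} v'"
    "\<And>t. t \<ge> -h \<Longrightarrow> (snd y has_real_derivative v' t) (at t within {-h..})"
    "\<And>t. t > 0 \<Longrightarrow> w' t = q (snd y t) * fst y t"
    "\<And>t. t > 0 \<Longrightarrow> v' t = j (seg h y t) - \<mu> * snd y t"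
    "\<And>\<theta>. \<theta> \<in> {-h..0} \<Longrightarrow> fst y \<theta> = a \<theta> \<and> snd y \<theta> = b \<theta>"
    by (fact is_solE[OF y(1)])
  from seg_solution_eq_vsol[OF this y(2) t] show "z = seg h (traj vsol) t" by (simp add: z)
qed

section \<open>The sets where \<open>\<rho>\<^sub>1\<close> and \<open>\<rho>\<^sub>m\<close> vanish along orbits\<close>

lemma Splus_0_apply:
  assumes "t \<ge> 0"
  shows "fst (Splus h Rm q j \<mu> t (a, b)) 0 = wcomp vsol t"
    and "snd (Splus h Rm q j \<mu> t (a, b)) 0 = vsol t"
  using Splus_eq[OF assms] seg_traj_0_apply by simp_all

lemma wcomp_vsol: "t \<ge> 0 \<Longrightarrow> wcomp vsol t = a 0 * exp (integral {0..t} (\<lambda>s. q (vsol s)))"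
  by (cases "t = 0") (auto simp: wcomp_def wexp_def)

lemma rho1_Splus_eq_0_iff: "(\<forall>t\<ge>0. rho1 (Splus h Rm q j \<mu> t (a, b)) = 0) \<longleftrightarrow> a 0 = 0"
proof
  assume "\<forall>t\<ge>0. rho1 (Splus h Rm q j \<mu> t (a, b)) = 0"
  then show "a 0 = 0" using Splus_0_apply(1)[of 0] by (simp add: rho1_def wcomp_def)
qed (simp add: rho1_def Splus_0_apply wcomp_vsol)

text \<open>If \<open>v\<close> vanished identically on \<open>[0,\<infinity>)\<close>, then \<open>j(x\<^sub>t) = v'(t) = 0\<close> for \<open>t > 0\<close>, while
  \<open>w(t) = a(0) exp (q(0) t)\<close> grows without bound; once \<open>w \<ge> K\<close> on a whole delay interval the
  hypothesis on \<open>j\<close> gives \<open>j(x\<^sub>t) > 0\<close>.\<close>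

lemma jtraj_vsol_eq_0:
  assumes vanish: "\<And>t. t \<ge> 0 \<Longrightarrow> vsol t = 0" and t: "t > 0"
  shows "jtraj vsol t = 0"
proof -
  have int: "at t within {-h..} = at t" using t h_pos by (intro at_within_interior) auto
  have "(vsol has_real_derivative vsol' t) (at t)"
    using admissibleD(3)[OF vsol_admissible, of t] t h_pos int by simp
  moreover have "(vsol has_real_derivative 0) (at t)"
    by (rule has_field_derivative_transform_within_open[OF DERIV_const, where S="{0<..}"]) (use t vanish in auto)
  ultimately have "vsol' t = 0" by (rule DERIV_unique)
  then show ?thesis using t vanish[of t] jtraj_vsol[of t] by (simp add: vsol'_def vsol_def)
qed

lemma vsol_not_identically_0:
  assumes a0: "a 0 > 0" and q0: "q 0 > 0"
    and K: "\<And>\<phi>. \<phi> \<in> Uplus h \<Longrightarrow> (\<forall>\<theta>\<in>{-h..0}. fst \<phi> \<theta> \<ge> K) \<Longrightarrow> j (fst \<phi>, \<lambda>_. 0) > 0"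
  shows "\<exists>t\<ge>0. vsol t \<noteq> 0"
proof (rule ccontr)
  assume "\<not> (\<exists>t\<ge>0. vsol t \<noteq> 0)"
  then have vanish: "\<And>t. t \<ge> 0 \<Longrightarrow> vsol t = 0" by auto
  define T where "T = h + \<bar>K\<bar> / (a 0 * q 0)"
  have aq: "a 0 * q 0 > 0" using a0 q0 by simp
  then have Th: "T \<ge> h" by (simp add: T_def)
  then have T: "T > 0" using h_pos by simp
  let ?\<phi> = "seg h (traj vsol) T"
  have "fst ?\<phi> \<theta> \<ge> K" if th: "\<theta> \<in> {-h..0}" for \<theta>
  proof -
    have r: "T + \<theta> \<ge> \<bar>K\<bar> / (a 0 * q 0)" using th by (simp add: T_def)
    then have r0: "T + \<theta> \<ge> 0" using aq by (meson abs_ge_zero divide_nonneg_pos order_trans)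
    have "integral {0..T + \<theta>} (\<lambda>s. q (vsol s)) = integral {0..T + \<theta>} (\<lambda>s. q 0)"
      using vanish by (intro integral_cong) auto
    also have "\<dots> = q 0 * (T + \<theta>)" using r0 by simp
    finally have "integral {0..T + \<theta>} (\<lambda>s. q (vsol s)) = q 0 * (T + \<theta>)" .
    then have w: "fst ?\<phi> \<theta> = a 0 * exp (q 0 * (T + \<theta>))"
      using th r0 wcomp_vsol by (simp add: fst_seg_traj)
    have "\<bar>K\<bar> = (a 0 * q 0) * (\<bar>K\<bar> / (a 0 * q 0))" using a0 q0 by simp
    also have "\<dots> \<le> (a 0 * q 0) * (T + \<theta>)" using r aq by (intro mult_left_mono) auto
    also have "\<dots> \<le> a 0 * exp (q 0 * (T + \<theta>))"
    proof -
      have "q 0 * (T + \<theta>) \<le> exp (q 0 * (T + \<theta>))"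
        using exp_ge_add_one_self[of "q 0 * (T + \<theta>)"] by linarith
      then show ?thesis using a0 by (simp add: mult.assoc)
    qed
    finally show ?thesis using w by linarith
  qed
  moreover have "snd ?\<phi> = (\<lambda>_. 0)"
    using Th vanish by (auto simp: snd_seg_traj fun_eq_iff)
  ultimately have "j ?\<phi> > 0"
    using K[OF seg_traj_Uplus[OF vsol_admissible]] T by (metis less_imp_le prod.collapse)
  with jtraj_vsol_eq_0[OF vanish T] show False by (simp add: jtraj_def)
qed

lemma rhom_Splus_eq_0_iff:
  assumes "q 0 > 0"
    and "\<And>\<phi>. \<phi> \<in> Uplus h \<Longrightarrow> (\<forall>\<theta>\<in>{-h..0}. fst \<phi> \<theta> \<ge> K) \<Longrightarrow> j (fst \<phi>, \<lambda>_. 0) > 0"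
  shows "(\<forall>t\<ge>0. rhom (Splus h Rm q j \<mu> t (a, b)) = 0) \<longleftrightarrow> a 0 = 0"
proof
  assume vanish: "\<forall>t\<ge>0. rhom (Splus h Rm q j \<mu> t (a, b)) = 0"
  show "a 0 = 0"
  proof (rule ccontr)
    assume "a 0 \<noteq> 0"
    then have a0: "a 0 > 0" using a_nonneg[of 0] by simp
    have "vsol t = 0" if "t \<ge> 0" for t
    proof -
      have "min (wcomp vsol t) (vsol t) = 0"
        using vanish that by (simp add: rhom_def Splus_0_apply)
      moreover have "wcomp vsol t > 0" using a0 that by (simp add: wcomp_vsol)
      ultimately show ?thesis using admissible_nonneg[OF vsol_admissible, of t] by linarith
    qed
    then show False using vsol_not_identically_0[OF a0 assms] by blast
  qed
next
  assume "a 0 = 0"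
  then show "\<forall>t\<ge>0. rhom (Splus h Rm q j \<mu> t (a, b)) = 0"
    using admissible_nonneg[OF vsol_admissible] by (simp add: rhom_def Splus_0_apply wcomp_vsol)
qed

end

theorem lemma19:
  fixes h Rm \<mu> :: real and q :: "real \<Rightarrow> real" and j :: "state \<Rightarrow> real"
  assumes "h > 0" and "Rm < 0" and "\<mu> \<ge> 0"
    and "H1 h Rm j" and "H2 Rm q" and "Xplus h Rm q j \<mu> \<noteq> {}"
    and "\<exists>\<phi>\<in>Xplus h Rm q j \<mu>. min (fst \<phi> 0) (snd \<phi> 0) > 0"
    and "q 0 > 0"
    and "j (\<lambda>_. 0, \<lambda>_. 0) = 0"
    and "\<exists>K. \<forall>\<phi>\<in>Uplus h. (\<forall>\<theta>\<in>{-h..0}. fst \<phi> \<theta> \<ge> K) \<longrightarrow> j (fst \<phi>, \<lambda>_. 0) > 0"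
  shows "X0 h Rm q j \<mu> rho1 = {\<phi>\<in>Xplus h Rm q j \<mu>. fst \<phi> 0 = 0} \<and>
         X0 h Rm q j \<mu> rhom = {\<phi>\<in>Xplus h Rm q j \<mu>. fst \<phi> 0 = 0}"
proof -
  obtain K where K: "\<And>\<phi>. \<phi> \<in> Uplus h \<Longrightarrow> (\<forall>\<theta>\<in>{-h..0}. fst \<phi> \<theta> \<ge> K) \<Longrightarrow> j (fst \<phi>, \<lambda>_. 0) > 0"
    using assms(10) by blast
  have init: "cell_fde_init h Rm \<mu> q j (fst \<phi>) (snd \<phi>)" if "\<phi> \<in> Xplus h Rm q j \<mu>" for \<phi>
    using assms(1-5) that by unfold_locales auto
  have "(\<forall>t\<ge>0. rho1 (Splus h Rm q j \<mu> t \<phi>) = 0) \<longleftrightarrow> fst \<phi> 0 = 0"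
    and "(\<forall>t\<ge>0. rhom (Splus h Rm q j \<mu> t \<phi>) = 0) \<longleftrightarrow> fst \<phi> 0 = 0"
    if "\<phi> \<in> Xplus h Rm q j \<mu>" for \<phi>
    using cell_fde_init.rho1_Splus_eq_0_iff[OF init[OF that]]
      cell_fde_init.rhom_Splus_eq_0_iff[OF init[OF that] assms(8) K] by simp_all
  then show ?thesis unfolding X0_def by blast
qed

end
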